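(* Let $B$ be a supersoluble brace and $p$ a prime. Then $U_p^+(B)=U_p^{\cdot}(B)$, and this set is an ideal of $B$.
   Context: A brace (skew left brace) is a set $B$ with two binary operations $+$ and $\cdot$ such that $(B,+)$ and $(B,\cdot)$ are groups and $a(b+c)=ab-a+ac$ for all $a,b,c\in B$. $\lambda_a(b)=-a+ab$ defines a homomorphism $\lambda\colon(B,\cdot)\to\operatorname{Aut}(B,+)$. An ideal is a subset that is a subgroup of both groups, normal in both, and invariant under all $\lambda_b$; quotients by ideals are braces. $\operatorname{Soc}(B)=\operatorname{Ker}\lambda\cap Z(B,+)$. $B$ is supersoluble if there is a finite chain of ideals $\{0\}=I_0\le\dots\le I_n=B$ such that for each $i$, either $(I_{i+1}/I_i,+)$ is infinite cyclic and $I_{i+1}/I_i\le\operatorname{Soc}(B/I_i)$, or $I_{i+1}/I_i$ has prime order. For a prime $p$, $U_p^+(B)$ (resp. $U_p^{\cdot}(B)$) is the set of elements of $B$ whose order in $(B,+)$ (resp. $(B,\cdot)$) is finite and divisible only by primes $q>p$. *)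

theory Defs
  imports "HOL-Algebra.Algebra" "HOL-Computational_Algebra.Primes"
begin

record 'a brace_str =
  bcar :: "'a set"
  bplus :: "'a \<Rightarrow> 'a \<Rightarrow> 'a"
  btimes :: "'a \<Rightarrow> 'a \<Rightarrow> 'a"

definition addgrp :: "'a brace_str \<Rightarrow> 'a monoid" where
  "addgrp B = \<lparr>carrier = bcar B, monoid.mult = bplus B,
     one = (THE e. e \<in> bcar B \<and> (\<forall>x\<in>bcar B. bplus B e x = x \<and> bplus B x e = x))\<rparr>"

definition mulgrp :: "'a brace_str \<Rightarrow> 'a monoid" where
  "mulgrp B = \<lparr>carrier = bcar B, monoid.mult = btimes B,
     one = (THE e. e \<in> bcar B \<and> (\<forall>x\<in>bcar B. btimes B e x = x \<and> btimes B x e = x))\<rparr>"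

definition is_brace :: "'a brace_str \<Rightarrow> bool" where
  "is_brace B \<longleftrightarrow> group (addgrp B) \<and> group (mulgrp B) \<and>
     (\<forall>a\<in>bcar B. \<forall>b\<in>bcar B. \<forall>c\<in>bcar B.
        btimes B a (bplus B b c) =
        bplus B (bplus B (btimes B a b) (inv\<^bsub>addgrp B\<^esub> a)) (btimes B a c))"

definition blambda :: "'a brace_str \<Rightarrow> 'a \<Rightarrow> 'a \<Rightarrow> 'a" where
  "blambda B a b = bplus B (inv\<^bsub>addgrp B\<^esub> a) (btimes B a b)"

definition is_ideal :: "'a brace_str \<Rightarrow> 'a set \<Rightarrow> bool" where
  "is_ideal B I \<longleftrightarrow> normal I (addgrp B) \<and> normal I (mulgrp B) \<and>
     (\<forall>b\<in>bcar B. \<forall>a\<in>I. blambda B b a \<in> I)"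

text \<open>For ideals \<open>I \<subseteq> J\<close>: \<open>J/I \<subseteq> Soc(B/I)\<close>, unfolded: for \<open>x \<in> J\<close> the class of \<open>x\<close>
  lies in the kernel of \<open>\<lambda>\<close> of \<open>B/I\<close> and in the centre of \<open>(B/I,+)\<close>.\<close>
definition quot_in_soc :: "'a brace_str \<Rightarrow> 'a set \<Rightarrow> 'a set \<Rightarrow> bool" where
  "quot_in_soc B I J \<longleftrightarrow> (\<forall>x\<in>J. \<forall>b\<in>bcar B.
     bplus B (blambda B x b) (inv\<^bsub>addgrp B\<^esub> b) \<in> I \<and>
     bplus B (bplus B x b) (inv\<^bsub>addgrp B\<^esub> (bplus B b x)) \<in> I)"

definition quot_add :: "'a brace_str \<Rightarrow> 'a set \<Rightarrow> 'a set \<Rightarrow> 'a set monoid" where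
  "quot_add B I J = ((addgrp B)\<lparr>carrier := J\<rparr>) Mod I"

definition supersoluble :: "'a brace_str \<Rightarrow> bool" where
  "supersoluble B \<longleftrightarrow> (\<exists>(I :: nat \<Rightarrow> 'a set) n.
     I 0 = {\<one>\<^bsub>addgrp B\<^esub>} \<and> I n = bcar B \<and>
     (\<forall>i\<le>n. is_ideal B (I i)) \<and>
     (\<forall>i<n. I i \<subseteq> I (Suc i) \<and>
        ((infinite (carrier (quot_add B (I i) (I (Suc i)))) \<and>
          (\<exists>g\<in>carrier (quot_add B (I i) (I (Suc i))).
             generate (quot_add B (I i) (I (Suc i))) {g} = carrier (quot_add B (I i) (I (Suc i)))) \<and>
          quot_in_soc B (I i) (I (Suc i)))
         \<or> Factorial_Ring.prime (card (carrier (quot_add B (I i) (I (Suc i))))))))"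

definition U_set :: "'a monoid \<Rightarrow> nat \<Rightarrow> 'a set" where
  "U_set G p = {b \<in> carrier G. group.ord G b \<noteq> 0 \<and>
       (\<forall>q. Factorial_Ring.prime q \<and> q dvd group.ord G b \<longrightarrow> q > p)}"

definition U_plus :: "'a brace_str \<Rightarrow> nat \<Rightarrow> 'a set" where
  "U_plus B p = U_set (addgrp B) p"

definition U_times :: "'a brace_str \<Rightarrow> nat \<Rightarrow> 'a set" where
  "U_times B p = U_set (mulgrp B) p"

end

theory Submission
  imports Defs "HOL-Number_Theory.Pocklington"
begin

(* Fix a supersoluble series 0 = I_0 <= ... <= I_n = B. Call a factor M/L of a chain of ideals
   small if it has prime order at most p, or is infinite cyclic with lambda acting trivially on
   it. By induction on k we find an ideal S contained in both U_p^+ and U_p^. and a chain of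
   ideals from S to I_k with small factors. A new factor of prime order q > p is moved to the
   bottom of this chain by repeated swaps and then absorbed into S, since an ideal S' with
   |S'/S| = q still lies in U_p^+ and in U_p^..

   To swap a small factor M/L below a factor N/M of order q, note that q does not divide
   |Aut(M/L)|, so N/L is abelian; the preimage T of its q-torsion satisfies |T/L| = q and
   N/T = M/L. This works in both groups of B, and the additive and the multiplicative preimage
   coincide, as one contains the other and both have index q over L; so T is an ideal. If M/L is
   infinite cyclic, lambda_x acts on N/T as a power map y -> y^k; since x^q lies in M, on which
   lambda acts trivially, k^q = 1, so k = 1 as q is odd.

   Finally, an element of U_p^+ or U_p^. in the top of a chain with small factors lies in its
   bottom, because small factors have no torsion of order coprime to the primes up to p. Hence
   U_p^+ = S = U_p^. *)

section \<open>Arithmetic\<close>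
lemma cong_one_of_prime_power_cong_one:
  fixes e :: int and r s :: nat
  assumes s: "Factorial_Ring.prime s" and r: "Factorial_Ring.prime r" and not_dvd: "\<not> r dvd s - 1"
    and pow: "[e ^ r = 1] (mod int s)"
  shows "[e = 1] (mod int s)"
proof -
  define c where "c = nat (e mod int s)"
  have ec: "[e = int c] (mod int s)"
    using s by (simp add: c_def cong_def prime_gt_0_nat)
  have "[int c ^ r = 1] (mod int s)"
    using cong_trans[OF cong_sym[OF cong_pow[OF ec]] pow] .
  then have "[c ^ r = Suc 0] (mod s)"
    by (metis cong_int_iff of_nat_1 of_nat_power One_nat_def)
  then have ord_dvd_r: "Pocklington.ord s c dvd r"
    by (simp add: ord_divides')
  then have "coprime s c"
    using r ord_eq_0[of s c] by auto
  then have "Pocklington.ord s c dvd s - 1"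
    using order_divides_totient[of s c] totient_prime[OF s] by simp
  then have "Pocklington.ord s c = Suc 0"
    using ord_dvd_r r not_dvd by (metis One_nat_def prime_nat_iff)
  then have "[c = 1] (mod s)"
    using ord_eq_Suc_0_iff by simp
  then show ?thesis
    using ec by (metis cong_int_iff cong_trans of_nat_1)
qed

lemma odd_power_eq_one_int:
  fixes e :: int
  assumes "odd r" and "e ^ r = 1"
  shows "e = 1"
  using assms by (smt (verit, best) odd_pos one_less_power power_eq_0_iff power_less_zero_eq)

lemma int_dvd_prime_mult_iff:
  fixes n r :: nat and k :: int
  assumes r: "Factorial_Ring.prime r" and n: "n = 0 \<or> (Factorial_Ring.prime n \<and> n \<noteq> r)"
  shows "int n dvd int r * k \<longleftrightarrow> int n dvd k"
  using n
proof
  assume "n = 0"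
  then show ?thesis
    using r by (auto simp: prime_gt_0_nat)
next
  assume n: "Factorial_Ring.prime n \<and> n \<noteq> r"
  then have "\<not> int n dvd int r"
    using r primes_dvd_imp_eq by (metis int_dvd_int_iff)
  then show ?thesis
    using n prime_dvd_mult_iff[of "int n"] by auto
qed

section \<open>Groups generated by two elements\<close>

context group begin

lemma conj_hom:
  assumes y: "y \<in> carrier G"
  shows "(\<lambda>x. y \<otimes> x \<otimes> inv y) \<in> hom G G"
proof (rule homI)
  fix a b assume "a \<in> carrier G" "b \<in> carrier G"
  then show "y \<otimes> (a \<otimes> b) \<otimes> inv y = y \<otimes> a \<otimes> inv y \<otimes> (y \<otimes> b \<otimes> inv y)"
    using y by (simp add: m_assoc inv_solve_left)
qed (use y in simp)

lemma conj_int_pow: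
  "x \<in> carrier G \<Longrightarrow> y \<in> carrier G \<Longrightarrow> y \<otimes> x [^] (k::int) \<otimes> inv y = (y \<otimes> x \<otimes> inv y) [^] k"
  using hom_int_pow[OF conj_hom[of y] _ is_group is_group, of x k] by simp

lemma conj_eq_iff_commute:
  "x \<in> carrier G \<Longrightarrow> y \<in> carrier G \<Longrightarrow> x \<otimes> y \<otimes> inv x = y \<longleftrightarrow> x \<otimes> y = y \<otimes> x"
  by (metis inv_solve_right m_closed)

lemma conj_iterate:
  assumes z: "z \<in> carrier G" and w: "w \<in> carrier G" and conj: "w \<otimes> z \<otimes> inv w = z [^] (e::int)"
  shows "w [^] (i::nat) \<otimes> z \<otimes> inv (w [^] i) = z [^] (e ^ i)"
proof (induction i)
  case 0
  then show ?case using z by simp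
next
  case (Suc i)
  have "w [^] Suc i \<otimes> z \<otimes> inv (w [^] Suc i) = w [^] i \<otimes> (w \<otimes> z \<otimes> inv w) \<otimes> inv (w [^] i)"
    using w z by (simp add: m_assoc inv_mult_group nat_pow_Suc2)
  also have "\<dots> = (w [^] i \<otimes> z \<otimes> inv (w [^] i)) [^] e"
    using conj conj_int_pow[OF z] w by simp
  also have "\<dots> = z [^] (e ^ Suc i)"
    using Suc int_pow_pow[OF z] by (simp add: mult.commute)
  finally show ?case .
qed

lemma commute_int_pow:
  assumes x: "x \<in> carrier G" and y: "y \<in> carrier G" and xy: "x \<otimes> y = y \<otimes> x"
  shows "x [^] (i::int) \<otimes> y [^] (j::int) = y [^] j \<otimes> x [^] i"
proof -
  have "y \<otimes> x [^] i \<otimes> inv y = x [^] i"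
    using conj_int_pow[OF x y] conj_eq_iff_commute[OF y x] xy by simp
  then have "x [^] i \<otimes> y \<otimes> inv (x [^] i) = y"
    using conj_eq_iff_commute x y by simp
  then have "x [^] i \<otimes> y [^] j \<otimes> inv (x [^] i) = y [^] j"
    using conj_int_pow[OF y int_pow_closed[OF x]] by simp
  then show ?thesis
    using conj_eq_iff_commute x y by simp
qed

text \<open>Conjugation by \<open>w\<close> restricts to an automorphism \<open>z \<mapsto> z\<^sup>e\<close> of \<open>\<langle>z\<rangle>\<close> whose \<open>r\<close>-th
  power is trivial, because \<open>w\<^sup>r \<in> \<langle>z\<rangle>\<close>. The hypothesis on \<open>ord z\<close> says that \<open>r\<close> does not
  divide \<open>|Aut \<langle>z\<rangle>|\<close>, which is \<open>2\<close> or \<open>ord z - 1\<close>.\<close>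
lemma commute_of_conj_eq_int_pow:
  assumes z: "z \<in> carrier G" and w: "w \<in> carrier G"
    and conj: "w \<otimes> z \<otimes> inv w = z [^] (e::int)" and pow: "w [^] (r::nat) = z [^] (a::int)"
    and r: "Factorial_Ring.prime r" "odd r"
    and ord_z: "ord z = 0 \<or> (Factorial_Ring.prime (ord z) \<and> \<not> r dvd ord z - 1)"
  shows "z \<otimes> w = w \<otimes> z"
proof -
  have "z [^] a \<otimes> z = z \<otimes> z [^] a"
    using commute_int_pow[OF z z refl, of a 1] z by simp
  then have "z [^] a \<otimes> z \<otimes> inv (z [^] a) = z"
    using conj_eq_iff_commute[OF int_pow_closed[OF z] z] by blast
  then have "w [^] r \<otimes> z \<otimes> inv (w [^] r) = z"
    using pow by simp
  then have "z [^] (e ^ r) = z [^] (1::int)"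
    using conj_iterate[OF z w conj, of r] z by simp
  then have dvd_pow: "int (ord z) dvd e ^ r - 1"
    using int_pow_eq[OF z] by (metis dvd_minus_iff minus_diff_eq)
  from ord_z have "int (ord z) dvd e - 1"
  proof
    assume "ord z = 0"
    then show ?thesis
      using dvd_pow odd_power_eq_one_int[OF r(2)] by simp
  next
    assume "Factorial_Ring.prime (ord z) \<and> \<not> r dvd ord z - 1"
    then show ?thesis
      using dvd_pow cong_one_of_prime_power_cong_one[OF _ r(1)] by (simp add: cong_iff_dvd_diff)
  qed
  then have "w \<otimes> z \<otimes> inv w = z"
    using conj int_pow_eq[OF z, of 1 e] z by simp
  then show ?thesis
    using conj_eq_iff_commute[OF w z] by simp
qed

lemma comm_group_of_commuting_generators:
  assumes z: "z \<in> carrier G" and w: "w \<in> carrier G" and zw: "z \<otimes> w = w \<otimes> z"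
    and gen: "\<forall>x\<in>carrier G. \<exists>(i::int) (j::int). x = z [^] j \<otimes> w [^] i"
  shows "comm_group G"
proof (rule group_comm_groupI)
  fix x y assume "x \<in> carrier G" "y \<in> carrier G"
  obtain i j :: int where x: "x = z [^] j \<otimes> w [^] i"
    using gen \<open>x \<in> carrier G\<close> by blast
  obtain k l :: int where y: "y = z [^] l \<otimes> w [^] k"
    using gen \<open>y \<in> carrier G\<close> by blast
  have "x \<otimes> y = z [^] j \<otimes> (w [^] i \<otimes> z [^] l) \<otimes> w [^] k"
    using x y z w by (simp add: m_assoc)
  also have "\<dots> = z [^] j \<otimes> z [^] l \<otimes> (w [^] i \<otimes> w [^] k)"
    using commute_int_pow[OF z w zw, of l i, symmetric] z w by (simp add: m_assoc)
  also have "\<dots> = z [^] l \<otimes> z [^] j \<otimes> (w [^] k \<otimes> w [^] i)"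
    using commute_int_pow[OF z z refl] commute_int_pow[OF w w refl] by simp
  also have "\<dots> = z [^] l \<otimes> (z [^] j \<otimes> w [^] k) \<otimes> w [^] i"
    using z w by (simp add: m_assoc)
  also have "\<dots> = y \<otimes> x"
    using commute_int_pow[OF z w zw, of j k] x y z w by (simp add: m_assoc)
  finally show "x \<otimes> y = y \<otimes> x" .
qed

text \<open>\<open>cyclic_factor L N z n\<close> says that \<open>N/L\<close> is cyclic of order \<open>n\<close> (infinite if \<open>n = 0\<close>),
  generated by the coset of \<open>z\<close>. It is stated elementwise, so that it can be compared for the
  two group structures of a brace without forming quotients.\<close>
definition cyclic_factor :: "'a set \<Rightarrow> 'a set \<Rightarrow> 'a \<Rightarrow> nat \<Rightarrow> bool" where
  "cyclic_factor L N z n \<longleftrightarrow> z \<in> N \<and> (\<forall>x\<in>N. \<exists>j::int. x \<otimes> inv (z [^] j) \<in> L) \<and>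
     (\<forall>j::int. z [^] j \<in> L \<longleftrightarrow> int n dvd j)"

lemma pow_prime_eq_one_iff:
  assumes z: "z \<in> carrier G" and r: "Factorial_Ring.prime r"
    and ord_z: "ord z = 0 \<or> (Factorial_Ring.prime (ord z) \<and> ord z \<noteq> r)"
  shows "(z [^] (k::int)) [^] r = \<one> \<longleftrightarrow> z [^] k = \<one>"
proof -
  have "(z [^] k) [^] r = z [^] (int r * k)"
    using z by (metis int_pow_int int_pow_pow mult.commute)
  then show ?thesis
    using int_dvd_prime_mult_iff[OF r ord_z, of k] int_pow_eq_id[OF z] by simp
qed

lemma ord_eq_0_of_nonsplit:
  assumes z: "z \<in> carrier G" and nonsplit: "\<And>b::int. z [^] (a::int) \<noteq> z [^] (int r * b)"
    and r: "Factorial_Ring.prime r" and ord_z: "ord z = 0 \<or> (Factorial_Ring.prime (ord z) \<and> ord z \<noteq> r)"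
  shows "ord z = 0"
proof (rule ccontr)
  assume "ord z \<noteq> 0"
  then have "coprime (int r) (int (ord z))"
    using ord_z r primes_dvd_imp_eq by (metis coprime_int_iff prime_imp_coprime_nat)
  then obtain u v where "u * int r + v * int (ord z) = 1"
    by (metis bezout_int coprime_iff_gcd_eq_1)
  then have "a * (u * int r + v * int (ord z)) = a"
    by simp
  then have "int r * (a * u) - a = int (ord z) * (- a * v)"
    by (simp add: algebra_simps)
  then have "z [^] a = z [^] (int r * (a * u))"
    using int_pow_eq[OF z] by (metis dvd_triv_left)
  then show False
    using nonsplit by blast
qed

lemma normal_pow_preimage:
  assumes L: "L \<lhd> G" and N: "N \<lhd> G" and T: "subgroup {x \<in> N. x [^] (m::nat) \<in> L} G"
  shows "{x \<in> N. x [^] m \<in> L} \<lhd> G"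
proof (rule normal_invI[OF T])
  fix g x assume g: "g \<in> carrier G" and "x \<in> {x \<in> N. x [^] m \<in> L}"
  then have x: "x \<in> N" "x \<in> carrier G" and "x [^] m \<in> L"
    using normal_imp_subgroup[OF N] subgroup.mem_carrier by auto
  then have "g \<otimes> x [^] int m \<otimes> inv g \<in> L"
    using normal_invE(2)[OF L g] by (simp add: int_pow_int)
  then have "(g \<otimes> x \<otimes> inv g) [^] m \<in> L"
    using conj_int_pow[OF x(2) g, of "int m"] by (simp add: int_pow_int)
  then show "g \<otimes> x \<otimes> inv g \<in> {x \<in> N. x [^] m \<in> L}"
    using normal_invE(2)[OF N g x(1)] by blast
qed

end

context comm_group begin

lemma subgroup_torsion: "subgroup {x \<in> carrier G. x [^] (m::nat) = \<one>} G"
  by (rule subgroupI) (auto simp: nat_pow_distrib nat_pow_inv)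

lemma torsion_eq_powers:
  assumes h: "h \<in> carrier G" "ord h = r" and z: "z \<in> carrier G"
    and repr: "\<And>x. x \<in> carrier G \<Longrightarrow> \<exists>(i::int) (k::int). x = h [^] i \<otimes> z [^] k"
    and z_pow_r: "\<And>k::int. (z [^] k) [^] r = \<one> \<longleftrightarrow> z [^] k = \<one>"
  shows "{x \<in> carrier G. x [^] r = \<one>} = range (\<lambda>i::int. h [^] i)"
proof (intro equalityI subsetI)
  have h_pow_r: "(h [^] i) [^] r = \<one>" for i :: int
  proof -
    have "(h [^] i) [^] r = h [^] (i * int r)"
      using h by (metis int_pow_int int_pow_pow)
    then show ?thesis
      using h int_pow_eq_id by simp
  qed
  fix x assume "x \<in> {x \<in> carrier G. x [^] r = \<one>}"
  then obtain i k :: int where x: "x = h [^] i \<otimes> z [^] k" and "x [^] r = \<one>"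
    using repr by blast
  then have "(h [^] i) [^] r \<otimes> (z [^] k) [^] r = \<one>"
    using h z by (simp add: pow_mult_distrib m_comm)
  then have "z [^] k = \<one>"
    using h_pow_r z_pow_r z by simp
  then show "x \<in> range (\<lambda>i::int. h [^] i)"
    using x h by simp
next
  fix x assume "x \<in> range (\<lambda>i::int. h [^] i)"
  then show "x \<in> {x \<in> carrier G. x [^] r = \<one>}"
    using h by (auto simp flip: int_pow_int simp: int_pow_pow int_pow_eq_id)
qed

lemma split_extension_complement:
  assumes z: "z \<in> carrier G" and w: "w \<in> carrier G"
    and gen: "\<forall>x\<in>carrier G. \<exists>(i::int) (j::int). x = z [^] j \<otimes> w [^] i"
    and pow: "w [^] int r = z [^] (int r * b)" and w_notin: "\<And>j::int. w \<noteq> z [^] j"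
    and r: "Factorial_Ring.prime r"
  obtains h where "h \<in> carrier G" "ord h = r"
    "\<And>x. x \<in> carrier G \<Longrightarrow> \<exists>(i::int) (k::int). x = h [^] i \<otimes> z [^] k"
proof
  define h where "h = w \<otimes> inv (z [^] b)"
  show h: "h \<in> carrier G"
    unfolding h_def using z w by simp
  have w_eq: "w = h \<otimes> z [^] b"
    unfolding h_def using z w by (simp add: m_assoc)
  have "h [^] int r = w [^] int r \<otimes> inv (z [^] b) [^] int r"
    unfolding h_def using z w by (simp add: int_pow_distrib)
  also have "\<dots> = \<one>"
    using z pow by (simp add: int_pow_inv int_pow_pow mult.commute)
  finally have "h [^] r = \<one>"
    by (simp add: int_pow_int)
  moreover have "h \<noteq> \<one>"
    using w_notin[of b] w_eq z by auto
  ultimately show "ord h = r"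
    using r pow_eq_id[OF h, of r] ord_eq_1[OF h] by (metis prime_nat_iff)
  fix x assume "x \<in> carrier G"
  then obtain i j :: int where "x = z [^] j \<otimes> w [^] i"
    using gen by blast
  also have "\<dots> = z [^] j \<otimes> (h [^] i \<otimes> z [^] (b * i))"
    using int_pow_distrib[OF h int_pow_closed[OF z], of b i] int_pow_pow[OF z] w_eq by simp
  also have "\<dots> = h [^] i \<otimes> z [^] (j + b * i)"
    using h z by (simp add: int_pow_mult m_lcomm)
  finally show "\<exists>(i::int) (k::int). x = h [^] i \<otimes> z [^] k"
    by blast
qed

lemma r_torsion_of_split_extension:
  assumes z: "z \<in> carrier G" and w: "w \<in> carrier G"
    and gen: "\<forall>x\<in>carrier G. \<exists>(i::int) (j::int). x = z [^] j \<otimes> w [^] i"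
    and pow: "w [^] int r = z [^] (int r * b)" and w_notin: "\<And>j::int. w \<noteq> z [^] j"
    and r: "Factorial_Ring.prime r" and ord_z: "ord z = 0 \<or> (Factorial_Ring.prime (ord z) \<and> ord z \<noteq> r)"
  shows "card {x \<in> carrier G. x [^] r = \<one>} = r \<and>
    cyclic_factor {x \<in> carrier G. x [^] r = \<one>} (carrier G) z (ord z)"
proof -
  obtain h where h: "h \<in> carrier G" "ord h = r"
    and repr: "\<And>x. x \<in> carrier G \<Longrightarrow> \<exists>(i::int) (k::int). x = h [^] i \<otimes> z [^] k"
    using split_extension_complement[OF z w gen pow w_notin r] by blast
  note z_pow_r = pow_prime_eq_one_iff[OF z r ord_z]
  note torsion = torsion_eq_powers[OF h z repr z_pow_r]
  have "card (range (\<lambda>i::int. h [^] i)) = r"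
    using generate_pow[OF h(1)] generate_pow_card[OF h(1)] h(2) by (simp add: full_SetCompr_eq)
  moreover have "cyclic_factor {x \<in> carrier G. x [^] r = \<one>} (carrier G) z (ord z)"
    unfolding cyclic_factor_def
  proof (intro conjI ballI allI)
    fix x assume "x \<in> carrier G"
    then obtain i k :: int where "x = h [^] i \<otimes> z [^] k"
      using repr by blast
    then have "x \<otimes> inv (z [^] k) \<in> range (\<lambda>i::int. h [^] i)"
      using h z by (simp add: m_assoc)
    then show "\<exists>j::int. x \<otimes> inv (z [^] j) \<in> {x \<in> carrier G. x [^] r = \<one>}"
      using torsion by blast
  next
    fix j :: int
    show "z [^] j \<in> {x \<in> carrier G. x [^] r = \<one>} \<longleftrightarrow> int (ord z) dvd j"
      using z_pow_r int_pow_eq_id z by simp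
  qed (use z in simp)
  ultimately show ?thesis
    using torsion by simp
qed

lemma generator_of_nonsplit_extension:
  assumes z: "z \<in> carrier G" and w: "w \<in> carrier G"
    and gen: "\<forall>x\<in>carrier G. \<exists>(i::int) (j::int). x = z [^] j \<otimes> w [^] i"
    and pow: "w [^] int r = z [^] (a::int)" and nonsplit: "\<And>b::int. z [^] a \<noteq> z [^] (int r * b)"
    and r: "Factorial_Ring.prime r"
  obtains g where "g \<in> carrier G" "g [^] int r = z" "\<And>x. x \<in> carrier G \<Longrightarrow> \<exists>k::int. x = g [^] k"
proof -
  have "\<not> int r dvd a"
    using nonsplit by (metis dvdE)
  then have "coprime a (int r)"
    using r by (metis coprime_commute prime_imp_coprime prime_nat_int_transfer)
  then obtain u v where uv: "u * a + v * int r = 1"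
    by (metis bezout_int coprime_iff_gcd_eq_1)
  define g where "g = w [^] u \<otimes> z [^] v"
  have g: "g \<in> carrier G"
    unfolding g_def using z w by simp
  have "g [^] int r = (w [^] int r) [^] u \<otimes> z [^] (v * int r)"
    unfolding g_def using z w by (simp add: int_pow_distrib int_pow_pow mult.commute)
  also have "\<dots> = z [^] (u * a + v * int r)"
    using pow z by (simp add: int_pow_pow int_pow_mult mult.commute)
  finally have g_pow_r: "g [^] int r = z"
    using uv z by simp
  have "g [^] a = w [^] (u * a) \<otimes> (w [^] int r) [^] v"
    unfolding g_def using z w pow by (simp add: int_pow_distrib int_pow_pow mult.commute)
  also have "\<dots> = w [^] (u * a + v * int r)"
    using w by (simp add: int_pow_pow int_pow_mult mult.commute)
  finally have g_pow_a: "g [^] a = w"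
    using uv w by simp
  have "\<exists>k::int. x = g [^] k" if x: "x \<in> carrier G" for x
  proof -
    obtain i j :: int where "x = z [^] j \<otimes> w [^] i"
      using gen x by blast
    also have "\<dots> = (g [^] int r) [^] j \<otimes> (g [^] a) [^] i"
      using g_pow_r g_pow_a by simp
    also have "\<dots> = g [^] (int r * j + a * i)"
      using g by (simp add: int_pow_pow int_pow_mult)
    finally show ?thesis ..
  qed
  then show ?thesis
    using that g g_pow_r by blast
qed

lemma infinite_cyclic_of_nonsplit_extension:
  assumes z: "z \<in> carrier G" and w: "w \<in> carrier G"
    and gen: "\<forall>x\<in>carrier G. \<exists>(i::int) (j::int). x = z [^] j \<otimes> w [^] i"
    and pow: "w [^] int r = z [^] (a::int)" and nonsplit: "\<And>b::int. z [^] a \<noteq> z [^] (int r * b)"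
    and r: "Factorial_Ring.prime r" and ord_z: "ord z = 0 \<or> (Factorial_Ring.prime (ord z) \<and> ord z \<noteq> r)"
  shows "ord z = 0 \<and> {x \<in> carrier G. x [^] r = \<one>} = {\<one>} \<and> (\<exists>g. cyclic_factor {\<one>} (carrier G) g 0)"
proof -
  have ord_z0: "ord z = 0"
    using ord_eq_0_of_nonsplit[OF z nonsplit r ord_z] .
  obtain g where g: "g \<in> carrier G" and g_pow_r: "g [^] int r = z"
    and powers: "\<And>x. x \<in> carrier G \<Longrightarrow> \<exists>k::int. x = g [^] k"
    using generator_of_nonsplit_extension[OF z w gen pow nonsplit r] by blast
  have "z [^] int (ord g) = (g [^] int (ord g)) [^] int r"
    unfolding g_pow_r[symmetric] by (simp only: int_pow_pow[OF g] mult.commute)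
  then have "ord g = 0"
    using g ord_z0 pow_eq_id[OF z] by (simp add: int_pow_int)
  then have g_pow_eq_one: "g [^] k = \<one> \<longleftrightarrow> k = 0" for k :: int
    using int_pow_eq_id[OF g] by simp
  have "{x \<in> carrier G. x [^] r = \<one>} = {\<one>}"
  proof (intro equalityI subsetI)
    fix x assume x: "x \<in> {x \<in> carrier G. x [^] r = \<one>}"
    then obtain k :: int where k: "x = g [^] k"
      using powers by blast
    then have "g [^] (k * int r) = \<one>"
      using x int_pow_pow[OF g, of k "int r"] by (simp add: int_pow_int)
    then show "x \<in> {\<one>}"
      using k r g_pow_eq_one by (simp add: prime_gt_0_nat)
  qed simp
  moreover have "cyclic_factor {\<one>} (carrier G) g 0"
    unfolding cyclic_factor_def
  proof (intro conjI ballI allI)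
    fix x assume "x \<in> carrier G"
    then obtain k :: int where "x = g [^] k"
      using powers by blast
    then have "x \<otimes> inv (g [^] k) = \<one>"
      using g by simp
    then show "\<exists>j::int. x \<otimes> inv (g [^] j) \<in> {\<one>}"
      by blast
  qed (use g g_pow_eq_one in auto)
  ultimately show ?thesis
    using ord_z0 by blast
qed

end

section \<open>Subquotients\<close>

locale subquotient = group G for G (structure) +
  fixes L N :: "'a set"
  assumes normal_L: "L \<lhd> G" and subgroup_N: "subgroup N G" and L_subset_N: "L \<subseteq> N"
begin

abbreviation K where "K \<equiv> G\<lparr>carrier := N\<rparr> Mod L"

lemma normal_L_in_N: "L \<lhd> G\<lparr>carrier := N\<rparr>"
  using normal_restrict_supergroup[OF subgroup_N normal_L L_subset_N] .

sublocale K: group K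
  using normal.factorgroup_is_group[OF normal_L_in_N] .

lemma N_carrier: "x \<in> N \<Longrightarrow> x \<in> carrier G"
  using subgroup.mem_carrier[OF subgroup_N] .

lemma int_pow_in_N: "x \<in> N \<Longrightarrow> x [^] (k::int) \<in> N"
  using subgroup_int_pow_closed[OF subgroup_N] .

lemma nat_pow_in_N: "x \<in> N \<Longrightarrow> x [^] (k::nat) \<in> N"
  using int_pow_in_N[of x "int k"] by (simp add: int_pow_int)

lemma carrier_K: "carrier K = (\<lambda>x. L #> x) ` N"
  by (simp add: carrier_FactGroup)

lemma rcos_in_K: "x \<in> N \<Longrightarrow> L #> x \<in> carrier K"
  using carrier_K by blast

lemma rcos_mult: "x \<in> N \<Longrightarrow> y \<in> N \<Longrightarrow> (L #> x) \<otimes>\<^bsub>K\<^esub> (L #> y) = L #> (x \<otimes> y)"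
  using normal.rcos_sum[OF normal_L_in_N, of x y]
  unfolding r_coset_consistent set_mult_consistent mult_FactGroup by simp

lemma rcos_int_pow: "x \<in> N \<Longrightarrow> (L #> x) [^]\<^bsub>K\<^esub> (k::int) = L #> (x [^] k)"
  using normal.FactGroup_int_pow[OF normal_L_in_N, of x k] int_pow_consistent[OF subgroup_N]
  unfolding r_coset_consistent by simp

lemma rcos_nat_pow: "x \<in> N \<Longrightarrow> (L #> x) [^]\<^bsub>K\<^esub> (k::nat) = L #> (x [^] k)"
  using rcos_int_pow[of x "int k"] by (simp add: int_pow_int)

lemma rcos_eq_iff: "x \<in> N \<Longrightarrow> y \<in> N \<Longrightarrow> L #> x = L #> y \<longleftrightarrow> x \<otimes> inv y \<in> L"
  using normal_imp_subgroup[OF normal_L] N_carrier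
  by (metis repr_independence repr_independenceD subgroup.rcos_module_imp subgroup.rcos_module_rev
      is_group)

lemma rcos_eq_L_iff: "x \<in> N \<Longrightarrow> L #> x = L \<longleftrightarrow> x \<in> L"
  using rcos_eq_iff[of x \<one>] subgroup.one_closed[OF subgroup_N] N_carrier
    coset_mult_one[OF subgroup.subset[OF normal_imp_subgroup[OF normal_L]]] by simp

lemma rcos_inv: "x \<in> N \<Longrightarrow> inv\<^bsub>K\<^esub> (L #> x) = L #> inv x"
  using rcos_int_pow[of x "-1"] K.int_pow_neg[OF rcos_in_K, of x 1] K.int_pow_1[OF rcos_in_K] N_carrier
  by (simp add: int_pow_neg)

lemma ord_rcos:
  assumes z: "z \<in> N" and pow: "\<And>j::int. z [^] j \<in> L \<longleftrightarrow> int n dvd j"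
  shows "K.ord (L #> z) = n"
proof -
  have "int (K.ord (L #> z)) dvd j \<longleftrightarrow> int n dvd j" for j :: int
    using K.int_pow_eq_id[OF rcos_in_K[OF z]] rcos_int_pow[OF z] pow
      rcos_eq_L_iff[OF int_pow_in_N[OF z]] by simp
  then show ?thesis
    by (metis dvd_antisym dvd_refl of_nat_dvd_iff)
qed

lemma generate_rcos_eq_K_iff:
  assumes z: "z \<in> N"
  shows "generate K {L #> z} = carrier K \<longleftrightarrow> (\<forall>x\<in>N. \<exists>j::int. x \<otimes> inv (z [^] j) \<in> L)"
proof -
  have powers: "generate K {L #> z} = {L #> (z [^] j) | j::int. True}"
    using K.generate_pow[OF rcos_in_K[OF z]] rcos_int_pow[OF z] by simp
  have "generate K {L #> z} \<subseteq> carrier K"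
    using K.generate_incl rcos_in_K[OF z] by blast
  then have "generate K {L #> z} = carrier K \<longleftrightarrow> (\<forall>x\<in>N. L #> x \<in> generate K {L #> z})"
    unfolding carrier_K by blast
  also have "\<dots> \<longleftrightarrow> (\<forall>x\<in>N. \<exists>j::int. L #> x = L #> (z [^] j))"
    unfolding powers by blast
  also have "\<dots> \<longleftrightarrow> (\<forall>x\<in>N. \<exists>j::int. x \<otimes> inv (z [^] j) \<in> L)"
    using rcos_eq_iff int_pow_in_N[OF z] by simp
  finally show ?thesis .
qed

lemma cyclic_factor_iff:
  "cyclic_factor L N z n \<longleftrightarrow> z \<in> N \<and> generate K {L #> z} = carrier K \<and> K.ord (L #> z) = n"
proof (cases "z \<in> N")
  case True
  have "(\<forall>j::int. z [^] j \<in> L \<longleftrightarrow> int n dvd j) \<longleftrightarrow> K.ord (L #> z) = n"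
  proof
    show "\<forall>j::int. z [^] j \<in> L \<longleftrightarrow> int n dvd j \<Longrightarrow> K.ord (L #> z) = n"
      using ord_rcos[OF True] by blast
    show "\<forall>j::int. z [^] j \<in> L \<longleftrightarrow> int n dvd j" if "K.ord (L #> z) = n"
      using that K.int_pow_eq_id[OF rcos_in_K[OF True]] rcos_int_pow[OF True]
        rcos_eq_L_iff[OF int_pow_in_N[OF True]] by simp
  qed
  then show ?thesis
    unfolding cyclic_factor_def using generate_rcos_eq_K_iff[OF True] True by blast
qed (simp add: cyclic_factor_def)

lemma card_of_cyclic_factor:
  assumes "cyclic_factor L N z n"
  shows "card (carrier K) = n"
proof -
  have "z \<in> N" and "generate K {L #> z} = carrier K" and "K.ord (L #> z) = n"
    using assms by (simp_all add: cyclic_factor_iff)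
  then show ?thesis
    using K.generate_pow_card[OF rcos_in_K] by simp
qed

lemma cyclic_factor_of_generator:
  assumes g: "g \<in> carrier K" and gen: "generate K {g} = carrier K"
  shows "\<exists>z. cyclic_factor L N z (card (carrier K))"
proof -
  obtain z where "z \<in> N" and "g = L #> z"
    using g carrier_K by blast
  then show ?thesis
    using gen K.generate_pow_card[OF g] by (auto simp: cyclic_factor_iff)
qed

lemma cyclic_factor_of_prime_card:
  assumes p: "Factorial_Ring.prime (card (carrier K))"
  shows "\<exists>z. cyclic_factor L N z (card (carrier K))"
proof -
  have "carrier K \<noteq> {\<one>\<^bsub>K\<^esub>}"
    using p by (intro notI) simp
  then obtain g where g: "g \<in> carrier K" and "g \<noteq> \<one>\<^bsub>K\<^esub>"
    using K.one_closed by blast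
  then have "K.ord g \<noteq> 1"
    using K.ord_eq_1 by blast
  moreover have "K.ord g dvd card (carrier K)"
    using K.ord_dvd_group_order[OF g] unfolding order_def .
  ultimately have "K.ord g = card (carrier K)"
    using p by (meson prime_nat_iff)
  then have "card (generate K {g}) = card (carrier K)"
    using K.generate_pow_card[OF g] by simp
  moreover have "finite (carrier K)"
    using p by (metis card.infinite not_prime_0)
  moreover have "generate K {g} \<subseteq> carrier K"
    using K.generate_incl g by simp
  ultimately have "generate K {g} = carrier K"
    using card_subset_eq by blast
  then show ?thesis
    using cyclic_factor_of_generator[OF g] by blast
qed

lemma pow_card_mem: "x \<in> N \<Longrightarrow> x [^] card (carrier K) \<in> L"
  using K.pow_order_eq_1[OF rcos_in_K, of x] rcos_nat_pow
    rcos_eq_L_iff[OF nat_pow_in_N]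
  unfolding order_def by simp

lemma mem_of_pow_mem:
  assumes x: "x \<in> N" and pow: "x [^] (m::nat) \<in> L" and m: "m > 0"
    and factor: "cyclic_factor L N z 0 \<or>
      (Factorial_Ring.prime (card (carrier K)) \<and> coprime m (card (carrier K)))"
  shows "x \<in> L"
proof -
  have "(L #> x) [^]\<^bsub>K\<^esub> m = \<one>\<^bsub>K\<^esub>"
    using pow rcos_nat_pow[OF x] rcos_eq_L_iff L_subset_N by auto
  then have ord_dvd: "K.ord (L #> x) dvd m"
    using K.pow_eq_id[OF rcos_in_K[OF x]] by simp
  from factor have "K.ord (L #> x) = 1"
  proof
    assume "cyclic_factor L N z 0"
    then have z: "z \<in> N" and gen: "generate K {L #> z} = carrier K" and "K.ord (L #> z) = 0"
      by (auto simp: cyclic_factor_iff)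
    have "L #> x \<in> generate K {L #> z}"
      using gen rcos_in_K[OF x] by simp
    then obtain j :: int where j: "L #> x = (L #> z) [^]\<^bsub>K\<^esub> j"
      using K.generate_pow[OF rcos_in_K[OF z]] by blast
    then have "(L #> z) [^]\<^bsub>K\<^esub> (j * int m) = \<one>\<^bsub>K\<^esub>"
      using \<open>(L #> x) [^]\<^bsub>K\<^esub> m = \<one>\<^bsub>K\<^esub>\<close> K.int_pow_pow[OF rcos_in_K[OF z]]
      by (metis int_pow_int)
    then have "j = 0"
      using K.int_pow_eq_id[OF rcos_in_K[OF z]] \<open>K.ord (L #> z) = 0\<close> m by simp
    then show ?thesis
      using j K.ord_eq_1[OF rcos_in_K[OF x]] by simp
  next
    assume "Factorial_Ring.prime (card (carrier K)) \<and> coprime m (card (carrier K))"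
    then show ?thesis
      using ord_dvd K.ord_dvd_group_order[OF rcos_in_K[OF x]]
      by (metis coprime_common_divisor_nat order_def)
  qed
  then show ?thesis
    using K.ord_eq_1[OF rcos_in_K[OF x]] rcos_eq_L_iff[OF x] by simp
qed

lemma card_factor_self: "card (carrier (G\<lparr>carrier := L\<rparr> Mod L)) = 1"
proof -
  have "L #> x = L" if "x \<in> L" for x
    using that rcos_eq_L_iff L_subset_N by blast
  moreover have "L \<noteq> {}"
    using subgroup.one_closed[OF normal_imp_subgroup[OF normal_L]] by blast
  ultimately have "carrier (G\<lparr>carrier := L\<rparr> Mod L) = {L}"
    by (auto simp: carrier_FactGroup)
  then show ?thesis
    by simp
qed

lemma subgroup_preimage:
  assumes R: "subgroup R K"
  shows "subgroup {x \<in> N. L #> x \<in> R} G"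
proof (rule subgroupI)
  show "{x \<in> N. L #> x \<in> R} \<subseteq> carrier G"
    using N_carrier by blast
  have "L #> \<one> = \<one>\<^bsub>K\<^esub>"
    using coset_mult_one subgroup.subset[OF normal_imp_subgroup[OF normal_L]] by simp
  then show "{x \<in> N. L #> x \<in> R} \<noteq> {}"
    using subgroup.one_closed[OF R] subgroup.one_closed[OF subgroup_N] by force
next
  fix x assume "x \<in> {x \<in> N. L #> x \<in> R}"
  then show "inv x \<in> {x \<in> N. L #> x \<in> R}"
    using subgroup.m_inv_closed[OF subgroup_N] subgroup.m_inv_closed[OF R] rcos_inv by fastforce
next
  fix x y assume "x \<in> {x \<in> N. L #> x \<in> R}" and "y \<in> {x \<in> N. L #> x \<in> R}"
  then show "x \<otimes> y \<in> {x \<in> N. L #> x \<in> R}"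
    using subgroup.m_closed[OF subgroup_N] subgroup.m_closed[OF R] rcos_mult by fastforce
qed

lemma carrier_preimage_factor:
  assumes "R \<subseteq> carrier K"
  shows "carrier (G\<lparr>carrier := {x \<in> N. L #> x \<in> R}\<rparr> Mod L) = R"
  using assms by (auto simp: carrier_FactGroup carrier_K)

lemma cyclic_factor_preimage:
  assumes R: "R \<subseteq> carrier K" and z: "z \<in> N"
    and cyclic: "K.cyclic_factor R (carrier K) (L #> z) n"
  shows "cyclic_factor {x \<in> N. L #> x \<in> R} N z n"
  unfolding cyclic_factor_def
proof (intro conjI ballI allI)
  fix x assume x: "x \<in> N"
  then obtain j :: int where "(L #> x) \<otimes>\<^bsub>K\<^esub> inv\<^bsub>K\<^esub> ((L #> z) [^]\<^bsub>K\<^esub> j) \<in> R"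
    using cyclic rcos_in_K unfolding K.cyclic_factor_def by blast
  moreover have "(L #> x) \<otimes>\<^bsub>K\<^esub> inv\<^bsub>K\<^esub> ((L #> z) [^]\<^bsub>K\<^esub> j) = L #> (x \<otimes> inv (z [^] j))"
    using x z int_pow_in_N rcos_int_pow rcos_inv rcos_mult subgroup.m_inv_closed[OF subgroup_N]
    by simp
  moreover have "x \<otimes> inv (z [^] j) \<in> N"
    using x z int_pow_in_N subgroup.m_inv_closed[OF subgroup_N] subgroup.m_closed[OF subgroup_N]
    by blast
  ultimately show "\<exists>j::int. x \<otimes> inv (z [^] j) \<in> {x \<in> N. L #> x \<in> R}"
    by auto
next
  fix j :: int
  show "z [^] j \<in> {x \<in> N. L #> x \<in> R} \<longleftrightarrow> int n dvd j"
    using cyclic z int_pow_in_N rcos_int_pow unfolding K.cyclic_factor_def by auto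
qed (use z in simp)

lemma pow_preimage_eq_torsion_preimage:
  "{x \<in> N. x [^] (m::nat) \<in> L} = {x \<in> N. L #> x \<in> {c \<in> carrier K. c [^]\<^bsub>K\<^esub> m = \<one>\<^bsub>K\<^esub>}}"
proof -
  have "(L #> x) [^]\<^bsub>K\<^esub> m = \<one>\<^bsub>K\<^esub> \<longleftrightarrow> x [^] m \<in> L" if "x \<in> N" for x
    using that by (simp add: rcos_nat_pow rcos_eq_L_iff nat_pow_in_N)
  then show ?thesis
    using rcos_in_K by blast
qed

lemma subset_pow_preimage: "L \<subseteq> {x \<in> N. x [^] (m::nat) \<in> L}"
  using L_subset_N subgroup_int_pow_closed[OF normal_imp_subgroup[OF normal_L], of _ "int m"]
  by (auto simp: int_pow_int)

end

lemma (in group) subquotientI: "L \<lhd> G \<Longrightarrow> subgroup N G \<Longrightarrow> L \<subseteq> N \<Longrightarrow> subquotient G L N"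
  by (intro subquotient.intro subquotient_axioms.intro is_group)

lemma (in group) eq_of_card_factor_eq:
  assumes L: "L \<lhd> G" and T: "subgroup T G" and T': "subgroup T' G"
    and LT: "L \<subseteq> T" and TT': "T \<subseteq> T'" and fin: "finite (carrier (G\<lparr>carrier := T'\<rparr> Mod L))"
    and card: "card (carrier (G\<lparr>carrier := T\<rparr> Mod L)) = card (carrier (G\<lparr>carrier := T'\<rparr> Mod L))"
  shows "T = T'"
proof -
  interpret Q: subquotient G L T
    using subquotientI[OF L T LT] .
  interpret Q': subquotient G L T'
    using subquotientI[OF L T'] LT TT' by blast
  have "(\<lambda>x. L #> x) ` T = (\<lambda>x. L #> x) ` T'"
    using card_subset_eq[OF fin _ card] TT' unfolding Q.carrier_K Q'.carrier_K by blast
  have "x \<in> T" if x: "x \<in> T'" for x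
  proof -
    have "L #> x \<in> (\<lambda>x. L #> x) ` T"
      using x \<open>(\<lambda>x. L #> x) ` T = (\<lambda>x. L #> x) ` T'\<close> by blast
    then obtain y where y: "y \<in> T" and "L #> x = L #> y"
      by blast
    then have "x \<otimes> inv y \<in> T"
      using Q'.rcos_eq_iff x TT' LT by blast
    then have "x \<otimes> inv y \<otimes> y \<in> T"
      using subgroup.m_closed[OF T _ y] by blast
    then show ?thesis
      using Q'.N_carrier[OF x] Q.N_carrier[OF y] by (simp add: m_assoc)
  qed
  then show ?thesis
    using TT' by blast
qed

section \<open>Swapping two cyclic factors of a group\<close>

locale cyclic_series = group G for G (structure) +
  fixes L M N :: "'a set" and z w :: 'a and n r :: nat
  assumes normal_L: "L \<lhd> G" and normal_M: "M \<lhd> G" and normal_N: "N \<lhd> G"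
    and L_subset_M: "L \<subseteq> M" and M_subset_N: "M \<subseteq> N"
    and lower: "cyclic_factor L M z n" and upper: "cyclic_factor M N w r"
begin

sublocale subquotient G L N
  using subquotientI[OF normal_L normal_imp_subgroup[OF normal_N]] L_subset_M M_subset_N by blast

lemma z_in_M: "z \<in> M" and z_in_N: "z \<in> N" and w_in_N: "w \<in> N"
  using lower upper M_subset_N unfolding cyclic_factor_def by auto

lemma factor_generated:
  "\<forall>c\<in>carrier K. \<exists>(i::int) (j::int). c = (L #> z) [^]\<^bsub>K\<^esub> j \<otimes>\<^bsub>K\<^esub> (L #> w) [^]\<^bsub>K\<^esub> i"
proof
  fix c assume "c \<in> carrier K"
  then obtain x where x: "x \<in> N" and c: "c = L #> x"
    using carrier_K by blast
  obtain i :: int where "x \<otimes> inv (w [^] i) \<in> M"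
    using upper x unfolding cyclic_factor_def by blast
  then obtain j :: int where "x \<otimes> inv (w [^] i) \<otimes> inv (z [^] j) \<in> L"
    using lower unfolding cyclic_factor_def by blast
  moreover have "x \<otimes> inv (w [^] i) \<otimes> inv (z [^] j) = x \<otimes> inv (z [^] j \<otimes> w [^] i)"
    using x z_in_N w_in_N N_carrier by (simp add: inv_mult_group m_assoc)
  ultimately have "L #> x = L #> (z [^] j \<otimes> w [^] i)"
    using rcos_eq_iff x int_pow_in_N z_in_N w_in_N subgroup.m_closed[OF subgroup_N] by simp
  then show "\<exists>(i::int) (j::int). c = (L #> z) [^]\<^bsub>K\<^esub> j \<otimes>\<^bsub>K\<^esub> (L #> w) [^]\<^bsub>K\<^esub> i"
    using c rcos_mult rcos_int_pow int_pow_in_N z_in_N w_in_N by auto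
qed

lemma ord_lower_generator: "K.ord (L #> z) = n"
  using ord_rcos[OF z_in_N] lower unfolding cyclic_factor_def by blast

lemma conj_lower_generator:
  "\<exists>e::int. (L #> w) \<otimes>\<^bsub>K\<^esub> (L #> z) \<otimes>\<^bsub>K\<^esub> inv\<^bsub>K\<^esub> (L #> w) = (L #> z) [^]\<^bsub>K\<^esub> e"
proof -
  have "w \<otimes> z \<otimes> inv w \<in> M"
    using normal_invE(2)[OF normal_M] N_carrier[OF w_in_N] z_in_M by blast
  then obtain e :: int where "w \<otimes> z \<otimes> inv w \<otimes> inv (z [^] e) \<in> L"
    using lower unfolding cyclic_factor_def by blast
  then have "L #> (w \<otimes> z \<otimes> inv w) = L #> (z [^] e)"
    using rcos_eq_iff \<open>w \<otimes> z \<otimes> inv w \<in> M\<close> M_subset_N int_pow_in_N z_in_N by blast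
  then show ?thesis
    using rcos_mult rcos_inv rcos_int_pow z_in_N w_in_N subgroup.m_closed[OF subgroup_N]
      subgroup.m_inv_closed[OF subgroup_N] by metis
qed

lemma upper_generator_pow:
  "\<exists>a::int. (L #> w) [^]\<^bsub>K\<^esub> int r = (L #> z) [^]\<^bsub>K\<^esub> a"
proof -
  have "w [^] int r \<in> M"
    using upper unfolding cyclic_factor_def by simp
  then obtain a :: int where "w [^] int r \<otimes> inv (z [^] a) \<in> L"
    using lower unfolding cyclic_factor_def by blast
  then have "L #> (w [^] int r) = L #> (z [^] a)"
    using rcos_eq_iff int_pow_in_N z_in_N w_in_N by blast
  then show ?thesis
    using rcos_int_pow z_in_N w_in_N by auto
qed

lemma upper_generator_pow_in_lower:
  assumes "(L #> w) [^]\<^bsub>K\<^esub> (i::int) = (L #> z) [^]\<^bsub>K\<^esub> (j::int)"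
  shows "int r dvd i"
proof -
  have "w [^] i \<otimes> inv (z [^] j) \<in> L"
    using assms rcos_int_pow rcos_eq_iff int_pow_in_N z_in_N w_in_N by auto
  then have "w [^] i \<otimes> inv (z [^] j) \<otimes> z [^] j \<in> M"
    using L_subset_M subgroup.m_closed[OF normal_imp_subgroup[OF normal_M]]
      subgroup_int_pow_closed[OF normal_imp_subgroup[OF normal_M] z_in_M] by blast
  then have "w [^] i \<in> M"
    using N_carrier z_in_N w_in_N by (simp add: m_assoc)
  then show ?thesis
    using upper unfolding cyclic_factor_def by blast
qed

lemma upper_generator_notin_lower:
  assumes "Factorial_Ring.prime r"
  shows "L #> w \<noteq> (L #> z) [^]\<^bsub>K\<^esub> (j::int)"
proof
  assume "L #> w = (L #> z) [^]\<^bsub>K\<^esub> j"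
  then have "int r dvd 1"
    using upper_generator_pow_in_lower[of 1 j] K.int_pow_1[OF rcos_in_K[OF w_in_N]] by simp
  then show False
    using assms by simp
qed

lemma comm_group_factor:
  assumes r: "Factorial_Ring.prime r" "odd r"
    and n: "n = 0 \<or> (Factorial_Ring.prime n \<and> \<not> r dvd n - 1)"
  shows "comm_group K"
proof -
  obtain e :: int where e: "(L #> w) \<otimes>\<^bsub>K\<^esub> (L #> z) \<otimes>\<^bsub>K\<^esub> inv\<^bsub>K\<^esub> (L #> w) = (L #> z) [^]\<^bsub>K\<^esub> e"
    using conj_lower_generator by blast
  obtain a :: int where a: "(L #> w) [^]\<^bsub>K\<^esub> int r = (L #> z) [^]\<^bsub>K\<^esub> a"
    using upper_generator_pow by blast
  have "(L #> z) \<otimes>\<^bsub>K\<^esub> (L #> w) = (L #> w) \<otimes>\<^bsub>K\<^esub> (L #> z)"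
    using K.commute_of_conj_eq_int_pow[OF rcos_in_K[OF z_in_N] rcos_in_K[OF w_in_N] e _ r]
      a n ord_lower_generator by (simp add: int_pow_int)
  then show ?thesis
    using K.comm_group_of_commuting_generators rcos_in_K z_in_N w_in_N factor_generated by blast
qed

lemma swap_split:
  assumes r: "Factorial_Ring.prime r" "odd r"
    and n: "n = 0 \<or> (Factorial_Ring.prime n \<and> n \<noteq> r \<and> \<not> r dvd n - 1)"
    and split: "(L #> w) [^]\<^bsub>K\<^esub> int r = (L #> z) [^]\<^bsub>K\<^esub> (int r * b)"
  shows "card (carrier (G\<lparr>carrier := {x \<in> N. x [^] r \<in> L}\<rparr> Mod L)) = r \<and>
    cyclic_factor {x \<in> N. x [^] r \<in> L} N z n"
proof -
  interpret K: comm_group K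
    using comm_group_factor r n by blast
  define R where "R = {c \<in> carrier K. c [^]\<^bsub>K\<^esub> r = \<one>\<^bsub>K\<^esub>}"
  have "K.ord (L #> z) = 0 \<or> (Factorial_Ring.prime (K.ord (L #> z)) \<and> K.ord (L #> z) \<noteq> r)"
    using n ord_lower_generator by auto
  then have "card R = r \<and> K.cyclic_factor R (carrier K) (L #> z) n"
    unfolding R_def ord_lower_generator[symmetric]
    using K.r_torsion_of_split_extension[OF rcos_in_K[OF z_in_N] rcos_in_K[OF w_in_N]
        factor_generated split upper_generator_notin_lower[OF r(1)] r(1)] by blast
  moreover have "R \<subseteq> carrier K"
    unfolding R_def by blast
  ultimately show ?thesis
    unfolding pow_preimage_eq_torsion_preimage R_def[symmetric]
    using carrier_preimage_factor cyclic_factor_preimage z_in_N by simp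
qed

lemma swap_nonsplit:
  assumes r: "Factorial_Ring.prime r" "odd r"
    and n: "n = 0 \<or> (Factorial_Ring.prime n \<and> n \<noteq> r \<and> \<not> r dvd n - 1)"
    and pow: "(L #> w) [^]\<^bsub>K\<^esub> int r = (L #> z) [^]\<^bsub>K\<^esub> (a::int)"
    and nonsplit: "\<And>b::int. (L #> z) [^]\<^bsub>K\<^esub> a \<noteq> (L #> z) [^]\<^bsub>K\<^esub> (int r * b)"
  shows "n = 0 \<and> {x \<in> N. x [^] r \<in> L} = L \<and> (\<exists>g. cyclic_factor L N g 0)"
proof -
  interpret K: comm_group K
    using comm_group_factor r n by blast
  have "K.ord (L #> z) = 0 \<or> (Factorial_Ring.prime (K.ord (L #> z)) \<and> K.ord (L #> z) \<noteq> r)"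
    using n ord_lower_generator by auto
  then have "n = 0" and R: "{c \<in> carrier K. c [^]\<^bsub>K\<^esub> r = \<one>\<^bsub>K\<^esub>} = {L}"
    and "\<exists>c. K.cyclic_factor {L} (carrier K) c 0"
    using K.infinite_cyclic_of_nonsplit_extension[OF rcos_in_K[OF z_in_N] rcos_in_K[OF w_in_N]
        factor_generated pow nonsplit r(1)] ord_lower_generator by simp_all
  then obtain c where c: "K.cyclic_factor {L} (carrier K) c 0"
    by blast
  then have "c \<in> carrier K"
    unfolding K.cyclic_factor_def by blast
  then obtain g where g: "g \<in> N" and "c = L #> g"
    using carrier_K by blast
  with c have "K.cyclic_factor {L} (carrier K) (L #> g) 0"
    by simp
  moreover have "{x \<in> N. L #> x \<in> {L}} = L"
    using rcos_eq_L_iff L_subset_N by blast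
  ultimately have "cyclic_factor L N g 0"
    using cyclic_factor_preimage[of "{L}" g 0] K.one_closed g by simp
  moreover have "{x \<in> N. x [^] r \<in> L} = L"
    unfolding pow_preimage_eq_torsion_preimage R using \<open>{x \<in> N. L #> x \<in> {L}} = L\<close> .
  ultimately show ?thesis
    using \<open>n = 0\<close> by blast
qed

text \<open>The new intermediate subgroup is the preimage of the \<open>r\<close>-torsion of the abelian group
  \<open>N/L\<close>.\<close>
theorem swap:
  assumes r: "Factorial_Ring.prime r" "odd r"
    and n: "n = 0 \<or> (Factorial_Ring.prime n \<and> n \<noteq> r \<and> \<not> r dvd n - 1)"
  shows "{x \<in> N. x [^] r \<in> L} \<lhd> G \<and> L \<subseteq> {x \<in> N. x [^] r \<in> L} \<and>
    ((card (carrier (G\<lparr>carrier := {x \<in> N. x [^] r \<in> L}\<rparr> Mod L)) = r \<and>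
      cyclic_factor {x \<in> N. x [^] r \<in> L} N z n) \<or>
     (n = 0 \<and> {x \<in> N. x [^] r \<in> L} = L \<and> (\<exists>g. cyclic_factor L N g 0)))"
proof -
  interpret K: comm_group K
    using comm_group_factor r n by blast
  have "subgroup {x \<in> N. x [^] r \<in> L} G"
    unfolding pow_preimage_eq_torsion_preimage using subgroup_preimage K.subgroup_torsion by blast
  then have "{x \<in> N. x [^] r \<in> L} \<lhd> G"
    using normal_pow_preimage normal_L normal_N by blast
  moreover obtain a :: int where a: "(L #> w) [^]\<^bsub>K\<^esub> int r = (L #> z) [^]\<^bsub>K\<^esub> a"
    using upper_generator_pow by blast
  have "(card (carrier (G\<lparr>carrier := {x \<in> N. x [^] r \<in> L}\<rparr> Mod L)) = r \<and>
      cyclic_factor {x \<in> N. x [^] r \<in> L} N z n) \<or>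
     (n = 0 \<and> {x \<in> N. x [^] r \<in> L} = L \<and> (\<exists>g. cyclic_factor L N g 0))"
  proof (cases "\<exists>b. (L #> z) [^]\<^bsub>K\<^esub> a = (L #> z) [^]\<^bsub>K\<^esub> (int r * b)")
    case True
    then obtain b :: int where "(L #> z) [^]\<^bsub>K\<^esub> a = (L #> z) [^]\<^bsub>K\<^esub> (int r * b)"
      by blast
    then show ?thesis
      using swap_split[OF r n] a by simp
  next
    case False
    then show ?thesis
      using swap_nonsplit[OF r n a] by blast
  qed
  ultimately show ?thesis
    using subset_pow_preimage by blast
qed

end

section \<open>Braces, the map \<open>\<lambda>\<close> and ideals\<close>

locale brace =
  fixes B :: "'a brace_str"
  assumes is_brace: "is_brace B"
begin

abbreviation Add where "Add \<equiv> addgrp B"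

abbreviation Mul where "Mul \<equiv> mulgrp B"

abbreviation lam where "lam \<equiv> blambda B"

sublocale Add: group Add
  using is_brace unfolding is_brace_def by blast

sublocale Mul: group Mul
  using is_brace unfolding is_brace_def by blast

lemma carrier_Add [simp]: "carrier Add = bcar B"
  by (simp add: addgrp_def)

lemma carrier_Mul [simp]: "carrier Mul = bcar B"
  by (simp add: mulgrp_def)

lemma Add_closed [simp]:
  "x \<in> bcar B \<Longrightarrow> y \<in> bcar B \<Longrightarrow> x \<otimes>\<^bsub>Add\<^esub> y \<in> bcar B"
  "x \<in> bcar B \<Longrightarrow> inv\<^bsub>Add\<^esub> x \<in> bcar B"
  "x \<in> bcar B \<Longrightarrow> x [^]\<^bsub>Add\<^esub> (k::int) \<in> bcar B"
  "x \<in> bcar B \<Longrightarrow> x [^]\<^bsub>Add\<^esub> (n::nat) \<in> bcar B"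
  "\<one>\<^bsub>Add\<^esub> \<in> bcar B"
  using Add.m_closed Add.inv_closed Add.int_pow_closed Add.nat_pow_closed Add.one_closed by auto

lemma Mul_closed [simp]:
  "x \<in> bcar B \<Longrightarrow> y \<in> bcar B \<Longrightarrow> x \<otimes>\<^bsub>Mul\<^esub> y \<in> bcar B"
  "x \<in> bcar B \<Longrightarrow> inv\<^bsub>Mul\<^esub> x \<in> bcar B"
  "x \<in> bcar B \<Longrightarrow> x [^]\<^bsub>Mul\<^esub> (k::int) \<in> bcar B"
  "x \<in> bcar B \<Longrightarrow> x [^]\<^bsub>Mul\<^esub> (n::nat) \<in> bcar B"
  "\<one>\<^bsub>Mul\<^esub> \<in> bcar B"
  using Mul.m_closed Mul.inv_closed Mul.int_pow_closed Mul.nat_pow_closed Mul.one_closed by auto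

lemma mult_Add: "x \<otimes>\<^bsub>Add\<^esub> y = bplus B x y"
  by (simp add: addgrp_def)

lemma mult_Mul: "x \<otimes>\<^bsub>Mul\<^esub> y = btimes B x y"
  by (simp add: mulgrp_def)

lemma brace_distrib:
  "a \<in> bcar B \<Longrightarrow> b \<in> bcar B \<Longrightarrow> c \<in> bcar B \<Longrightarrow>
    a \<otimes>\<^bsub>Mul\<^esub> (b \<otimes>\<^bsub>Add\<^esub> c) = a \<otimes>\<^bsub>Mul\<^esub> b \<otimes>\<^bsub>Add\<^esub> inv\<^bsub>Add\<^esub> a \<otimes>\<^bsub>Add\<^esub> (a \<otimes>\<^bsub>Mul\<^esub> c)"
  using is_brace unfolding is_brace_def by (simp add: mult_Add mult_Mul)

lemma one_Mul: "\<one>\<^bsub>Mul\<^esub> = \<one>\<^bsub>Add\<^esub>"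
proof -
  have "\<one>\<^bsub>Add\<^esub> = \<one>\<^bsub>Mul\<^esub> \<otimes>\<^bsub>Mul\<^esub> (\<one>\<^bsub>Add\<^esub> \<otimes>\<^bsub>Add\<^esub> \<one>\<^bsub>Add\<^esub>)"
    by simp
  also have "\<dots> = inv\<^bsub>Add\<^esub> \<one>\<^bsub>Mul\<^esub>"
    using brace_distrib[of "\<one>\<^bsub>Mul\<^esub>" "\<one>\<^bsub>Add\<^esub>" "\<one>\<^bsub>Add\<^esub>"] by simp
  finally show ?thesis
    by (metis Add.inv_inv Add.inv_one Mul.one_closed carrier_Mul carrier_Add)
qed

lemma lam_eq: "lam a b = inv\<^bsub>Add\<^esub> a \<otimes>\<^bsub>Add\<^esub> (a \<otimes>\<^bsub>Mul\<^esub> b)"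
  unfolding blambda_def by (simp add: mult_Add mult_Mul)

lemma lam_closed [simp]: "a \<in> bcar B \<Longrightarrow> b \<in> bcar B \<Longrightarrow> lam a b \<in> bcar B"
  unfolding lam_eq using Add.m_closed Add.inv_closed Mul.m_closed by simp

lemma mult_eq_add_lam: "a \<in> bcar B \<Longrightarrow> b \<in> bcar B \<Longrightarrow> a \<otimes>\<^bsub>Mul\<^esub> b = a \<otimes>\<^bsub>Add\<^esub> lam a b"
  unfolding lam_eq using Mul.m_closed by (simp add: Add.m_assoc[symmetric])

lemma lam_add:
  assumes "a \<in> bcar B" "b \<in> bcar B" "c \<in> bcar B"
  shows "lam a (b \<otimes>\<^bsub>Add\<^esub> c) = lam a b \<otimes>\<^bsub>Add\<^esub> lam a c"
  unfolding lam_eq using assms brace_distrib[OF assms] Mul.m_closed by (simp add: Add.m_assoc)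

lemma lam_hom: "a \<in> bcar B \<Longrightarrow> lam a \<in> hom Add Add"
  by (rule homI) (simp_all add: lam_add)

lemma lam_inv: "a \<in> bcar B \<Longrightarrow> b \<in> bcar B \<Longrightarrow> lam a (inv\<^bsub>Add\<^esub> b) = inv\<^bsub>Add\<^esub> (lam a b)"
  using group_hom.hom_inv[of Add Add "lam a" b] lam_hom Add.is_group
  by (simp add: group_hom_axioms_def group_hom_def)

lemma lam_int_pow:
  "a \<in> bcar B \<Longrightarrow> b \<in> bcar B \<Longrightarrow> lam a (b [^]\<^bsub>Add\<^esub> (k::int)) = (lam a b) [^]\<^bsub>Add\<^esub> k"
  using hom_int_pow[OF lam_hom _ Add.is_group Add.is_group, of a b k] by simp

lemma lam_one: "b \<in> bcar B \<Longrightarrow> lam \<one>\<^bsub>Add\<^esub> b = b"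
  unfolding lam_eq using Mul.l_one[of b] one_Mul by simp

lemma lam_mult:
  assumes a: "a \<in> bcar B" and b: "b \<in> bcar B" and c: "c \<in> bcar B"
  shows "lam a (lam b c) = lam (a \<otimes>\<^bsub>Mul\<^esub> b) c"
proof -
  have "lam a (lam b c) = inv\<^bsub>Add\<^esub> (lam a b) \<otimes>\<^bsub>Add\<^esub> lam a (b \<otimes>\<^bsub>Mul\<^esub> c)"
    using lam_add lam_inv a b c by (simp add: lam_eq[of b c])
  also have "\<dots> = inv\<^bsub>Add\<^esub> (a \<otimes>\<^bsub>Mul\<^esub> b) \<otimes>\<^bsub>Add\<^esub> (a \<otimes>\<^bsub>Mul\<^esub> (b \<otimes>\<^bsub>Mul\<^esub> c))"
  proof -
    have "a \<otimes>\<^bsub>Add\<^esub> (inv\<^bsub>Add\<^esub> a \<otimes>\<^bsub>Add\<^esub> x) = x" if "x \<in> bcar B" for x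
      using a that by (simp add: Add.m_assoc[symmetric])
    then show ?thesis
      using a b c by (simp add: lam_eq Add.inv_mult_group Add.m_assoc)
  qed
  finally show ?thesis
    using a b c by (simp add: lam_eq Mul.m_assoc Add.m_assoc[symmetric])
qed

lemma lam_lam_inv: "a \<in> bcar B \<Longrightarrow> b \<in> bcar B \<Longrightarrow> lam a (lam (inv\<^bsub>Mul\<^esub> a) b) = b"
  using lam_mult[of a "inv\<^bsub>Mul\<^esub> a" b] lam_one one_Mul by simp

lemma inv_Mul_eq: "a \<in> bcar B \<Longrightarrow> inv\<^bsub>Mul\<^esub> a = inv\<^bsub>Add\<^esub> (lam (inv\<^bsub>Mul\<^esub> a) a)"
  using mult_eq_add_lam[of "inv\<^bsub>Mul\<^esub> a" a] one_Mul
  by (metis Add.inv_equality Mul.inv_closed Mul.l_inv carrier_Add carrier_Mul lam_closed)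

lemma ideal_normal_Add: "is_ideal B I \<Longrightarrow> I \<lhd> Add"
  unfolding is_ideal_def by blast

lemma ideal_normal_Mul: "is_ideal B I \<Longrightarrow> I \<lhd> Mul"
  unfolding is_ideal_def by blast

lemma ideal_lam: "is_ideal B I \<Longrightarrow> b \<in> bcar B \<Longrightarrow> x \<in> I \<Longrightarrow> lam b x \<in> I"
  unfolding is_ideal_def by blast

lemma ideal_subset: "is_ideal B I \<Longrightarrow> I \<subseteq> bcar B"
  using subgroup.subset[OF normal_imp_subgroup[OF ideal_normal_Add]] by simp

lemma is_idealI:
  "I \<lhd> Add \<Longrightarrow> I \<lhd> Mul \<Longrightarrow> (\<And>b x. b \<in> bcar B \<Longrightarrow> x \<in> I \<Longrightarrow> lam b x \<in> I) \<Longrightarrow> is_ideal B I"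
  unfolding is_ideal_def by blast

lemma subquotient_Add_ideals:
  "is_ideal B L \<Longrightarrow> is_ideal B N \<Longrightarrow> L \<subseteq> N \<Longrightarrow> subquotient Add L N"
  using Add.subquotientI ideal_normal_Add normal_imp_subgroup by blast

lemma subquotient_Mul_ideals:
  "is_ideal B L \<Longrightarrow> is_ideal B N \<Longrightarrow> L \<subseteq> N \<Longrightarrow> subquotient Mul L N"
  using Mul.subquotientI ideal_normal_Mul normal_imp_subgroup by blast

lemma subgroup_Mul_of_lam_invariant:
  assumes S: "subgroup S Add" and invariant: "\<And>b x. b \<in> bcar B \<Longrightarrow> x \<in> S \<Longrightarrow> lam b x \<in> S"
  shows "subgroup S Mul"
proof (rule Mul.subgroupI)
  have S_carrier: "S \<subseteq> bcar B"
    using subgroup.subset[OF S] by simp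
  then show "S \<subseteq> carrier Mul"
    by simp
  show "S \<noteq> {}"
    using subgroup.one_closed[OF S] by blast
  show "inv\<^bsub>Mul\<^esub> a \<in> S" if a: "a \<in> S" for a
  proof -
    have a_carrier: "a \<in> bcar B"
      using a S_carrier by blast
    then have "inv\<^bsub>Add\<^esub> (lam (inv\<^bsub>Mul\<^esub> a) a) \<in> S"
      using invariant[of "inv\<^bsub>Mul\<^esub> a" a] subgroup.m_inv_closed[OF S] a by simp
    then show ?thesis
      by (subst inv_Mul_eq[OF a_carrier])
  qed
  show "a \<otimes>\<^bsub>Mul\<^esub> b \<in> S" if a: "a \<in> S" and b: "b \<in> S" for a b
  proof -
    have "a \<in> bcar B" "b \<in> bcar B"
      using a b S_carrier by blast+
    then show ?thesis
      using mult_eq_add_lam[of a b] invariant[of a b] subgroup.m_closed[OF S] a b by simp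
  qed
qed

lemma ideal_rcos_eq:
  assumes I: "is_ideal B I" and x: "x \<in> bcar B"
  shows "I #>\<^bsub>Mul\<^esub> x = I #>\<^bsub>Add\<^esub> x"
proof -
  have "x <#\<^bsub>Mul\<^esub> I = x <#\<^bsub>Add\<^esub> I"
  proof (intro equalityI subsetI)
    fix y assume "y \<in> x <#\<^bsub>Mul\<^esub> I"
    then obtain i where "i \<in> I" and "y = x \<otimes>\<^bsub>Add\<^esub> lam x i"
      using mult_eq_add_lam x ideal_subset[OF I] unfolding l_coset_def by blast
    then show "y \<in> x <#\<^bsub>Add\<^esub> I"
      using ideal_lam[OF I x] unfolding l_coset_def by blast
  next
    fix y assume "y \<in> x <#\<^bsub>Add\<^esub> I"
    then obtain j where j: "j \<in> I" and "y = x \<otimes>\<^bsub>Add\<^esub> j"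
      unfolding l_coset_def by blast
    then have "y = x \<otimes>\<^bsub>Mul\<^esub> lam (inv\<^bsub>Mul\<^esub> x) j"
      using mult_eq_add_lam lam_lam_inv x ideal_subset[OF I] by auto
    then show "y \<in> x <#\<^bsub>Mul\<^esub> I"
      using ideal_lam[OF I _ j] x unfolding l_coset_def by auto
  qed
  then show ?thesis
    using normal.coset_eq[OF ideal_normal_Add[OF I]] normal.coset_eq[OF ideal_normal_Mul[OF I]] x
    by simp
qed

lemma factor_carrier_Mul_eq:
  assumes L: "is_ideal B L" and N: "N \<subseteq> bcar B"
  shows "carrier (Mul\<lparr>carrier := N\<rparr> Mod L) = carrier (Add\<lparr>carrier := N\<rparr> Mod L)"
  using ideal_rcos_eq[OF L] N by (auto simp: carrier_FactGroup)

lemma cyclic_series_Add: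
  "is_ideal B L \<Longrightarrow> is_ideal B M \<Longrightarrow> is_ideal B N \<Longrightarrow> L \<subseteq> M \<Longrightarrow> M \<subseteq> N \<Longrightarrow>
    Add.cyclic_factor L M z n \<Longrightarrow> Add.cyclic_factor M N w r \<Longrightarrow> cyclic_series Add L M N z w n r"
  by (intro cyclic_series.intro cyclic_series_axioms.intro Add.is_group ideal_normal_Add)

lemma cyclic_series_Mul:
  "is_ideal B L \<Longrightarrow> is_ideal B M \<Longrightarrow> is_ideal B N \<Longrightarrow> L \<subseteq> M \<Longrightarrow> M \<subseteq> N \<Longrightarrow>
    Mul.cyclic_factor L M z n \<Longrightarrow> Mul.cyclic_factor M N w r \<Longrightarrow> cyclic_series Mul L M N z w n r"
  by (intro cyclic_series.intro cyclic_series_axioms.intro Mul.is_group ideal_normal_Mul)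

lemma Mul_cyclic_factor_of_prime_card:
  assumes L: "is_ideal B L" and M: "is_ideal B M" and LM: "L \<subseteq> M"
    and prime: "Factorial_Ring.prime (card (carrier (Add\<lparr>carrier := M\<rparr> Mod L)))"
  shows "\<exists>z. Mul.cyclic_factor L M z (card (carrier (Add\<lparr>carrier := M\<rparr> Mod L)))"
  using subquotient.cyclic_factor_of_prime_card[OF subquotient_Mul_ideals[OF L M LM]] prime
    factor_carrier_Mul_eq[OF L ideal_subset[OF M]] by simp

section \<open>The action of \<open>\<lambda>\<close> on a cyclic factor\<close>
definition lambda_trivial :: "'a set \<Rightarrow> 'a set \<Rightarrow> bool" where
  "lambda_trivial L M \<longleftrightarrow> (\<forall>x\<in>M. \<forall>y\<in>M. lam x y \<otimes>\<^bsub>Add\<^esub> inv\<^bsub>Add\<^esub> y \<in> L)"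

lemma rcos_Mul_int_pow_eq:
  assumes L: "is_ideal B L" and M: "is_ideal B M" and LM: "L \<subseteq> M"
    and triv: "lambda_trivial L M" and z: "z \<in> M"
  shows "L #>\<^bsub>Add\<^esub> (z [^]\<^bsub>Mul\<^esub> (k::int)) = L #>\<^bsub>Add\<^esub> (z [^]\<^bsub>Add\<^esub> k)"
proof -
  interpret Q: subquotient Add L M
    using subquotient_Add_ideals[OF L M LM] .
  have M_Mul: "subgroup M Mul"
    using normal_imp_subgroup[OF ideal_normal_Mul[OF M]] .
  have "(\<lambda>x. L #>\<^bsub>Add\<^esub> x) \<in> hom (Mul\<lparr>carrier := M\<rparr>) Q.K"
  proof (rule homI)
    fix a b assume "a \<in> carrier (Mul\<lparr>carrier := M\<rparr>)" "b \<in> carrier (Mul\<lparr>carrier := M\<rparr>)"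
    then have a: "a \<in> M" "a \<in> bcar B" and b: "b \<in> M" "b \<in> bcar B"
      using ideal_subset[OF M] by auto
    have "L #>\<^bsub>Add\<^esub> lam a b = L #>\<^bsub>Add\<^esub> b"
      using Q.rcos_eq_iff[OF ideal_lam[OF M a(2) b(1)] b(1)] triv a b unfolding lambda_trivial_def
      by blast
    then show "L #>\<^bsub>Add\<^esub> (a \<otimes>\<^bsub>Mul\<lparr>carrier := M\<rparr>\<^esub> b) =
        (L #>\<^bsub>Add\<^esub> a) \<otimes>\<^bsub>Q.K\<^esub> (L #>\<^bsub>Add\<^esub> b)"
      using mult_eq_add_lam[OF a(2) b(2)] Q.rcos_mult[OF a(1) ideal_lam[OF M a(2) b(1)]] by simp
  qed (use Q.rcos_in_K in simp)
  then have "L #>\<^bsub>Add\<^esub> (z [^]\<^bsub>Mul\<lparr>carrier := M\<rparr>\<^esub> k) = (L #>\<^bsub>Add\<^esub> z) [^]\<^bsub>Q.K\<^esub> k"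
    using hom_int_pow[OF _ _ Mul.subgroup_imp_group[OF M_Mul] Q.K.is_group] z by simp
  then show ?thesis
    using Mul.int_pow_consistent[OF M_Mul z] Q.rcos_int_pow[OF z] by simp
qed

lemma cyclic_factor_Mul_of_lambda_trivial:
  assumes L: "is_ideal B L" and M: "is_ideal B M" and LM: "L \<subseteq> M"
    and triv: "lambda_trivial L M" and cyclic: "Add.cyclic_factor L M z n"
  shows "Mul.cyclic_factor L M z n"
proof -
  interpret QA: subquotient Add L M
    using subquotient_Add_ideals[OF L M LM] .
  interpret QM: subquotient Mul L M
    using subquotient_Mul_ideals[OF L M LM] .
  have z: "z \<in> M"
    using cyclic unfolding Add.cyclic_factor_def by blast
  have rcos_pow: "L #>\<^bsub>Mul\<^esub> (z [^]\<^bsub>Mul\<^esub> j) = L #>\<^bsub>Add\<^esub> (z [^]\<^bsub>Add\<^esub> j)" for j :: int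
  proof -
    have "z [^]\<^bsub>Mul\<^esub> j \<in> bcar B"
      using QM.int_pow_in_N[OF z] ideal_subset[OF M] by blast
    then have "L #>\<^bsub>Mul\<^esub> (z [^]\<^bsub>Mul\<^esub> j) = L #>\<^bsub>Add\<^esub> (z [^]\<^bsub>Mul\<^esub> j)"
      by (rule ideal_rcos_eq[OF L])
    also have "\<dots> = L #>\<^bsub>Add\<^esub> (z [^]\<^bsub>Add\<^esub> j)"
      by (rule rcos_Mul_int_pow_eq[OF L M LM triv z])
    finally show ?thesis .
  qed
  have rcos_eq: "L #>\<^bsub>Mul\<^esub> x = L #>\<^bsub>Add\<^esub> x" if "x \<in> M" for x
    using ideal_rcos_eq[OF L] that ideal_subset[OF M] by blast
  show ?thesis
    unfolding Mul.cyclic_factor_def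
  proof (intro conjI ballI allI)
    fix x assume x: "x \<in> M"
    then obtain j :: int where "x \<otimes>\<^bsub>Add\<^esub> inv\<^bsub>Add\<^esub> (z [^]\<^bsub>Add\<^esub> j) \<in> L"
      using cyclic unfolding Add.cyclic_factor_def by blast
    then have "L #>\<^bsub>Mul\<^esub> x = L #>\<^bsub>Mul\<^esub> (z [^]\<^bsub>Mul\<^esub> j)"
      using QA.rcos_eq_iff[OF x QA.int_pow_in_N[OF z]] rcos_pow rcos_eq[OF x] by simp
    then show "\<exists>j::int. x \<otimes>\<^bsub>Mul\<^esub> inv\<^bsub>Mul\<^esub> (z [^]\<^bsub>Mul\<^esub> j) \<in> L"
      using QM.rcos_eq_iff[OF x QM.int_pow_in_N[OF z]] by blast
  next
    fix j :: int
    have "z [^]\<^bsub>Mul\<^esub> j \<in> L \<longleftrightarrow> z [^]\<^bsub>Add\<^esub> j \<in> L"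
      using QM.rcos_eq_L_iff[OF QM.int_pow_in_N[OF z]] QA.rcos_eq_L_iff[OF QA.int_pow_in_N[OF z]]
        rcos_pow by simp
    then show "z [^]\<^bsub>Mul\<^esub> j \<in> L \<longleftrightarrow> int n dvd j"
      using cyclic unfolding Add.cyclic_factor_def by blast
  qed (rule z)
qed

lemma lam_rcos_cong:
  assumes I: "is_ideal B I" and J: "is_ideal B J" and IJ: "I \<subseteq> J" and x: "x \<in> bcar B"
    and y: "y \<in> J" and y': "y' \<in> J" and eq: "I #>\<^bsub>Add\<^esub> y = I #>\<^bsub>Add\<^esub> y'"
  shows "I #>\<^bsub>Add\<^esub> lam x y = I #>\<^bsub>Add\<^esub> lam x y'"
proof -
  interpret Q: subquotient Add I J
    using subquotient_Add_ideals[OF I J IJ] .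
  have "y \<in> bcar B" "y' \<in> bcar B"
    using y y' ideal_subset[OF J] by auto
  moreover have "y \<otimes>\<^bsub>Add\<^esub> inv\<^bsub>Add\<^esub> y' \<in> I"
    using Q.rcos_eq_iff[OF y y'] eq by simp
  ultimately have "lam x y \<otimes>\<^bsub>Add\<^esub> inv\<^bsub>Add\<^esub> (lam x y') \<in> I"
    using ideal_lam[OF I x] lam_add[OF x] lam_inv[OF x] by fastforce
  then show ?thesis
    using Q.rcos_eq_iff ideal_lam[OF J x] y y' by blast
qed

text \<open>\<open>\<lambda>\<^sub>x\<close> induces an automorphism of the cyclic group \<open>J/I\<close>, hence acts on it as a
  power map.\<close>
lemma lam_acts_by_power:
  assumes I: "is_ideal B I" and J: "is_ideal B J" and IJ: "I \<subseteq> J"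
    and cyclic: "Add.cyclic_factor I J g n" and x: "x \<in> bcar B"
  shows "\<exists>k::int. \<forall>y\<in>J. I #>\<^bsub>Add\<^esub> lam x y = I #>\<^bsub>Add\<^esub> (y [^]\<^bsub>Add\<^esub> k)"
proof -
  interpret Q: subquotient Add I J
    using subquotient_Add_ideals[OF I J IJ] .
  have g: "g \<in> J" "g \<in> bcar B"
    using cyclic ideal_subset[OF J] unfolding Add.cyclic_factor_def by auto
  have lam_g: "lam x g \<in> J"
    using ideal_lam[OF J x g(1)] .
  obtain k :: int where "lam x g \<otimes>\<^bsub>Add\<^esub> inv\<^bsub>Add\<^esub> (g [^]\<^bsub>Add\<^esub> k) \<in> I"
    using cyclic lam_g unfolding Add.cyclic_factor_def by blast
  then have k: "I #>\<^bsub>Add\<^esub> lam x g = I #>\<^bsub>Add\<^esub> (g [^]\<^bsub>Add\<^esub> k)"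
    using Q.rcos_eq_iff[OF lam_g Q.int_pow_in_N[OF g(1)]] by simp
  have "I #>\<^bsub>Add\<^esub> lam x y = I #>\<^bsub>Add\<^esub> (y [^]\<^bsub>Add\<^esub> k)" if y: "y \<in> J" for y
  proof -
    obtain j :: int where "y \<otimes>\<^bsub>Add\<^esub> inv\<^bsub>Add\<^esub> (g [^]\<^bsub>Add\<^esub> j) \<in> I"
      using cyclic y unfolding Add.cyclic_factor_def by blast
    then have j: "I #>\<^bsub>Add\<^esub> y = (I #>\<^bsub>Add\<^esub> g) [^]\<^bsub>Q.K\<^esub> j"
      using Q.rcos_eq_iff[OF y Q.int_pow_in_N[OF g(1)]] Q.rcos_int_pow[OF g(1)] by simp
    have "I #>\<^bsub>Add\<^esub> lam x y = I #>\<^bsub>Add\<^esub> lam x (g [^]\<^bsub>Add\<^esub> j)"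
      using lam_rcos_cong[OF I J IJ x y Q.int_pow_in_N[OF g(1)]] j Q.rcos_int_pow[OF g(1)] by simp
    also have "\<dots> = (I #>\<^bsub>Add\<^esub> lam x g) [^]\<^bsub>Q.K\<^esub> j"
      using lam_int_pow[OF x g(2)] Q.rcos_int_pow[OF lam_g] by simp
    also have "\<dots> = ((I #>\<^bsub>Add\<^esub> g) [^]\<^bsub>Q.K\<^esub> j) [^]\<^bsub>Q.K\<^esub> k"
      using k Q.rcos_int_pow[OF g(1)] Q.K.int_pow_pow[OF Q.rcos_in_K[OF g(1)]] by (simp add: mult.commute)
    also have "\<dots> = I #>\<^bsub>Add\<^esub> (y [^]\<^bsub>Add\<^esub> k)"
      using j Q.rcos_int_pow[OF y] by simp
    finally show ?thesis .
  qed
  then show ?thesis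
    by blast
qed

lemma lam_Mul_pow_acts_by_power:
  assumes I: "is_ideal B I" and J: "is_ideal B J" and IJ: "I \<subseteq> J" and x: "x \<in> bcar B"
    and acts: "\<forall>y\<in>J. I #>\<^bsub>Add\<^esub> lam x y = I #>\<^bsub>Add\<^esub> (y [^]\<^bsub>Add\<^esub> (k::int))"
  shows "\<forall>y\<in>J. I #>\<^bsub>Add\<^esub> lam (x [^]\<^bsub>Mul\<^esub> (m::nat)) y = I #>\<^bsub>Add\<^esub> (y [^]\<^bsub>Add\<^esub> (k ^ m))"
proof (induction m)
  case 0
  show ?case
    using lam_one one_Mul ideal_subset[OF J] by auto
next
  case (Suc m)
  interpret Q: subquotient Add I J
    using subquotient_Add_ideals[OF I J IJ] .
  show ?case
  proof
    fix y assume y: "y \<in> J"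
    then have y_carrier: "y \<in> bcar B"
      using ideal_subset[OF J] by blast
    have "I #>\<^bsub>Add\<^esub> lam (x [^]\<^bsub>Mul\<^esub> Suc m) y = I #>\<^bsub>Add\<^esub> lam (x [^]\<^bsub>Mul\<^esub> m) (lam x y)"
      using lam_mult[of "x [^]\<^bsub>Mul\<^esub> m" x y] x y_carrier by simp
    also have "\<dots> = I #>\<^bsub>Add\<^esub> lam (x [^]\<^bsub>Mul\<^esub> m) (y [^]\<^bsub>Add\<^esub> k)"
      using lam_rcos_cong[OF I J IJ _ ideal_lam[OF J x y] Q.int_pow_in_N[OF y]] acts y x by simp
    also have "\<dots> = (I #>\<^bsub>Add\<^esub> lam (x [^]\<^bsub>Mul\<^esub> m) y) [^]\<^bsub>Q.K\<^esub> k"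
      using lam_int_pow y_carrier x Q.rcos_int_pow ideal_lam[OF J _ y] by simp
    also have "\<dots> = (I #>\<^bsub>Add\<^esub> y) [^]\<^bsub>Q.K\<^esub> (k ^ m * k)"
      using Suc y Q.rcos_int_pow[OF y] Q.K.int_pow_pow[OF Q.rcos_in_K[OF y]] by simp
    also have "\<dots> = I #>\<^bsub>Add\<^esub> (y [^]\<^bsub>Add\<^esub> (k ^ Suc m))"
      using Q.rcos_int_pow[OF y] by (simp add: mult.commute)
    finally show "I #>\<^bsub>Add\<^esub> lam (x [^]\<^bsub>Mul\<^esub> Suc m) y = I #>\<^bsub>Add\<^esub> (y [^]\<^bsub>Add\<^esub> (k ^ Suc m))" .
  qed
qed

lemma lambda_trivial_of_odd_power:
  assumes I: "is_ideal B I" and J: "is_ideal B J" and IJ: "I \<subseteq> J"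
    and cyclic: "Add.cyclic_factor I J g n" and x: "x \<in> bcar B"
    and z: "z \<in> J" and z_inf: "\<forall>j::int. z [^]\<^bsub>Add\<^esub> j \<in> I \<longleftrightarrow> j = 0"
    and r: "odd (r::nat)" and fixes_z: "lam (x [^]\<^bsub>Mul\<^esub> r) z \<otimes>\<^bsub>Add\<^esub> inv\<^bsub>Add\<^esub> z \<in> I"
  shows "\<forall>y\<in>J. lam x y \<otimes>\<^bsub>Add\<^esub> inv\<^bsub>Add\<^esub> y \<in> I"
proof -
  interpret Q: subquotient Add I J
    using subquotient_Add_ideals[OF I J IJ] .
  obtain k :: int where acts: "\<forall>y\<in>J. I #>\<^bsub>Add\<^esub> lam x y = I #>\<^bsub>Add\<^esub> (y [^]\<^bsub>Add\<^esub> k)"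
    using lam_acts_by_power[OF I J IJ cyclic x] by blast
  have "I #>\<^bsub>Add\<^esub> (z [^]\<^bsub>Add\<^esub> (k ^ r)) = I #>\<^bsub>Add\<^esub> lam (x [^]\<^bsub>Mul\<^esub> r) z"
    using lam_Mul_pow_acts_by_power[OF I J IJ x acts] z by simp
  also have "\<dots> = I #>\<^bsub>Add\<^esub> (z [^]\<^bsub>Add\<^esub> (1::int))"
  proof -
    have "x [^]\<^bsub>Mul\<^esub> r \<in> bcar B" and "z \<in> bcar B"
      using x z ideal_subset[OF J] by auto
    then show ?thesis
      using Q.rcos_eq_iff[OF ideal_lam[OF J _ z] z] fixes_z by simp
  qed
  finally have "z [^]\<^bsub>Add\<^esub> (k ^ r) \<otimes>\<^bsub>Add\<^esub> inv\<^bsub>Add\<^esub> (z [^]\<^bsub>Add\<^esub> (1::int)) \<in> I"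
    using Q.rcos_eq_iff[OF Q.int_pow_in_N[OF z] Q.int_pow_in_N[OF z]] by blast
  moreover have "z \<in> bcar B"
    using z ideal_subset[OF J] by blast
  ultimately have "z [^]\<^bsub>Add\<^esub> (k ^ r - 1) \<in> I"
    using Add.int_pow_diff[of z "k ^ r" 1] by simp
  then have "k = 1"
    using z_inf odd_power_eq_one_int[OF r] by simp
  show ?thesis
  proof
    fix y assume y: "y \<in> J"
    then have "I #>\<^bsub>Add\<^esub> lam x y = I #>\<^bsub>Add\<^esub> y"
      using acts \<open>k = 1\<close> ideal_subset[OF J] by auto
    then show "lam x y \<otimes>\<^bsub>Add\<^esub> inv\<^bsub>Add\<^esub> y \<in> I"
      using Q.rcos_eq_iff[OF ideal_lam[OF J x y] y] by blast
  qed
qed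

section \<open>Swapping two factors of a chain of ideals\<close>
definition small_factor :: "nat \<Rightarrow> 'a set \<Rightarrow> 'a set \<Rightarrow> bool" where
  "small_factor p L M \<longleftrightarrow>
     (Factorial_Ring.prime (card (carrier (Add\<lparr>carrier := M\<rparr> Mod L))) \<and>
      card (carrier (Add\<lparr>carrier := M\<rparr> Mod L)) \<le> p) \<or>
     ((\<exists>z. Add.cyclic_factor L M z 0) \<and> lambda_trivial L M)"

lemma lam_invariant_pow_preimage:
  assumes L: "is_ideal B L" and N: "is_ideal B N" and b: "b \<in> bcar B"
    and x: "x \<in> {x \<in> N. x [^]\<^bsub>Add\<^esub> (r::nat) \<in> L}"
  shows "lam b x \<in> {x \<in> N. x [^]\<^bsub>Add\<^esub> r \<in> L}"
proof -
  have x_N: "x \<in> N" and x_carrier: "x \<in> bcar B" and "x [^]\<^bsub>Add\<^esub> int r \<in> L"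
    using x ideal_subset[OF N] by (auto simp: int_pow_int)
  then have "lam b (x [^]\<^bsub>Add\<^esub> int r) \<in> L"
    using ideal_lam[OF L b] by blast
  then have "(lam b x) [^]\<^bsub>Add\<^esub> r \<in> L"
    using lam_int_pow[OF b x_carrier, of "int r"] by (simp add: int_pow_int)
  then show ?thesis
    using ideal_lam[OF N b x_N] by blast
qed

lemma pow_Mul_mem_of_card_factor:
  assumes L: "is_ideal B L" and T: "T \<lhd> Add" "L \<subseteq> T"
    and invariant: "\<And>b x. b \<in> bcar B \<Longrightarrow> x \<in> T \<Longrightarrow> lam b x \<in> T" and x: "x \<in> T"
  shows "x [^]\<^bsub>Mul\<^esub> card (carrier (Add\<lparr>carrier := T\<rparr> Mod L)) \<in> L"
proof -
  have "subgroup T Mul"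
    using subgroup_Mul_of_lam_invariant[OF normal_imp_subgroup[OF T(1)] invariant] .
  then interpret Q: subquotient Mul L T
    using Mul.subquotientI[OF ideal_normal_Mul[OF L] _ T(2)] by blast
  show ?thesis
    using Q.pow_card_mem[OF x] factor_carrier_Mul_eq[OF L] subgroup.subset[OF normal_imp_subgroup[OF T(1)]]
    by simp
qed

lemma pow_preimage_Add_subset_Mul:
  assumes L: "is_ideal B L" and N: "is_ideal B N" and LN: "L \<subseteq> N"
    and normal_Add: "{x \<in> N. x [^]\<^bsub>Add\<^esub> r \<in> L} \<lhd> Add"
    and card_Add: "card (carrier (Add\<lparr>carrier := {x \<in> N. x [^]\<^bsub>Add\<^esub> r \<in> L}\<rparr> Mod L)) = r"
  shows "{x \<in> N. x [^]\<^bsub>Add\<^esub> r \<in> L} \<subseteq> {x \<in> N. x [^]\<^bsub>Mul\<^esub> r \<in> L}"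
proof -
  have "L \<subseteq> {x \<in> N. x [^]\<^bsub>Add\<^esub> r \<in> L}"
    using subquotient.subset_pow_preimage[OF subquotient_Add_ideals[OF L N LN]] .
  then show ?thesis
    using pow_Mul_mem_of_card_factor[OF L normal_Add _ lam_invariant_pow_preimage[OF L N]] card_Add
    by auto
qed

lemma ideal_pow_preimage:
  assumes L: "is_ideal B L" and N: "is_ideal B N" and LN: "L \<subseteq> N" and r: "Factorial_Ring.prime r"
    and normal_Add: "{x \<in> N. x [^]\<^bsub>Add\<^esub> r \<in> L} \<lhd> Add"
    and card_Add: "card (carrier (Add\<lparr>carrier := {x \<in> N. x [^]\<^bsub>Add\<^esub> r \<in> L}\<rparr> Mod L)) = r"
    and normal_Mul: "{x \<in> N. x [^]\<^bsub>Mul\<^esub> r \<in> L} \<lhd> Mul"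
    and card_Mul: "card (carrier (Mul\<lparr>carrier := {x \<in> N. x [^]\<^bsub>Mul\<^esub> r \<in> L}\<rparr> Mod L)) = r \<or>
      {x \<in> N. x [^]\<^bsub>Mul\<^esub> r \<in> L} = L"
  shows "is_ideal B {x \<in> N. x [^]\<^bsub>Add\<^esub> r \<in> L}"
proof -
  define T where "T = {x \<in> N. x [^]\<^bsub>Add\<^esub> r \<in> L}"
  define T' where "T' = {x \<in> N. x [^]\<^bsub>Mul\<^esub> r \<in> L}"
  have invariant: "\<And>b x. b \<in> bcar B \<Longrightarrow> x \<in> T \<Longrightarrow> lam b x \<in> T"
    unfolding T_def using lam_invariant_pow_preimage[OF L N] by blast
  have "L \<subseteq> T" and "T \<subseteq> T'"
    using subquotient.subset_pow_preimage[OF subquotient_Add_ideals[OF L N LN]]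
      pow_preimage_Add_subset_Mul[OF L N LN normal_Add card_Add] unfolding T_def T'_def by blast+
  moreover have "T \<noteq> L"
    using card_Add subquotient.card_factor_self[OF subquotient_Add_ideals[OF L N LN]] r
    unfolding T_def by auto
  ultimately have card_T': "card (carrier (Mul\<lparr>carrier := T'\<rparr> Mod L)) = r"
    using card_Mul unfolding T'_def by blast
  have "T \<subseteq> bcar B"
    unfolding T_def using ideal_subset[OF N] by blast
  then have "card (carrier (Mul\<lparr>carrier := T\<rparr> Mod L)) = r"
    using card_Add factor_carrier_Mul_eq[OF L] unfolding T_def by simp
  moreover have "finite (carrier (Mul\<lparr>carrier := T'\<rparr> Mod L))"
    using card_T' r by (intro card_ge_0_finite) (simp add: prime_gt_0_nat)
  ultimately have "T = T'"
    using Mul.eq_of_card_factor_eq[OF ideal_normal_Mul[OF L] _ normal_imp_subgroup[OF normal_Mul]]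
      subgroup_Mul_of_lam_invariant[OF normal_imp_subgroup[OF normal_Add] invariant[unfolded T_def]]
      \<open>L \<subseteq> T\<close> \<open>T \<subseteq> T'\<close> card_T' unfolding T_def T'_def by simp
  then show ?thesis
    using is_idealI[OF normal_Add _ invariant[unfolded T_def]] normal_Mul unfolding T_def T'_def by simp
qed

text \<open>The additive and the multiplicative swap produce the same intermediate subgroup, which is
  therefore an ideal.\<close>
lemma swap_ideal:
  fixes L M N :: "'a set" and n :: nat
  defines "r \<equiv> card (carrier (Add\<lparr>carrier := N\<rparr> Mod M))"
  defines "T \<equiv> {x \<in> N. x [^]\<^bsub>Add\<^esub> r \<in> L}"
  assumes p: "Factorial_Ring.prime p"
    and L: "is_ideal B L" and M: "is_ideal B M" and N: "is_ideal B N" and LM: "L \<subseteq> M" and MN: "M \<subseteq> N"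
    and z: "Add.cyclic_factor L M z n" and z': "Mul.cyclic_factor L M z' n"
    and n: "n = 0 \<or> (Factorial_Ring.prime n \<and> n \<le> p)"
    and r: "Factorial_Ring.prime r" "r > p"
  shows "(is_ideal B T \<and> L \<subseteq> T \<and> T \<subseteq> N \<and> card (carrier (Add\<lparr>carrier := T\<rparr> Mod L)) = r \<and>
      Add.cyclic_factor T N z n) \<or> (n = 0 \<and> T = L \<and> (\<exists>g. Add.cyclic_factor L N g 0))"
proof -
  obtain w where w: "Add.cyclic_factor M N w r"
    using subquotient.cyclic_factor_of_prime_card[OF subquotient_Add_ideals[OF M N MN]] r(1)
    unfolding r_def by blast
  obtain w' where w': "Mul.cyclic_factor M N w' r"
    using Mul_cyclic_factor_of_prime_card[OF M N MN r(1)[unfolded r_def]] unfolding r_def by blast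
  interpret SA: cyclic_series Add L M N z w n r
    using cyclic_series_Add[OF L M N LM MN z w] .
  interpret SM: cyclic_series Mul L M N z' w' n r
    using cyclic_series_Mul[OF L M N LM MN z' w'] .
  have r_odd: "odd r"
    using prime_odd_nat[OF r(1)] r(2) prime_ge_2_nat[OF p] by linarith
  have "\<not> r dvd n - 1" if "Factorial_Ring.prime n" "n \<le> p"
    using prime_gt_1_nat[OF that(1)] that(2) r(2) by (auto dest: dvd_imp_le)
  then have n_cond: "n = 0 \<or> (Factorial_Ring.prime n \<and> n \<noteq> r \<and> \<not> r dvd n - 1)"
    using n r(2) by auto
  note swap_Add = SA.swap[OF r(1) r_odd n_cond, folded T_def]
  note swap_Mul = SM.swap[OF r(1) r_odd n_cond]
  have "card (carrier (Add\<lparr>carrier := T\<rparr> Mod L)) = r \<Longrightarrow> is_ideal B T"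
    unfolding T_def using ideal_pow_preimage[OF L N _ r(1)] swap_Add swap_Mul LM MN
    unfolding T_def by blast
  moreover have "T \<subseteq> N"
    unfolding T_def by blast
  ultimately show ?thesis
    using swap_Add by blast
qed

lemma swap_small_prime_factor:
  assumes p: "Factorial_Ring.prime p"
    and L: "is_ideal B L" and M: "is_ideal B M" and N: "is_ideal B N" and LM: "L \<subseteq> M" and MN: "M \<subseteq> N"
    and s: "Factorial_Ring.prime (card (carrier (Add\<lparr>carrier := M\<rparr> Mod L)))"
      "card (carrier (Add\<lparr>carrier := M\<rparr> Mod L)) \<le> p"
    and r: "Factorial_Ring.prime (card (carrier (Add\<lparr>carrier := N\<rparr> Mod M)))"
      "card (carrier (Add\<lparr>carrier := N\<rparr> Mod M)) > p"
  shows "\<exists>M'. is_ideal B M' \<and> L \<subseteq> M' \<and> M' \<subseteq> N \<and>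
    card (carrier (Add\<lparr>carrier := M'\<rparr> Mod L)) = card (carrier (Add\<lparr>carrier := N\<rparr> Mod M)) \<and>
    small_factor p M' N"
proof -
  define s where "s = card (carrier (Add\<lparr>carrier := M\<rparr> Mod L))"
  obtain z where z: "Add.cyclic_factor L M z s"
    using subquotient.cyclic_factor_of_prime_card[OF subquotient_Add_ideals[OF L M LM]] s(1)
    unfolding s_def by blast
  obtain z' where z': "Mul.cyclic_factor L M z' s"
    using Mul_cyclic_factor_of_prime_card[OF L M LM s(1)] unfolding s_def by blast
  have "s \<noteq> 0" and "s = 0 \<or> (Factorial_Ring.prime s \<and> s \<le> p)"
    using s unfolding s_def by auto
  then obtain T where T: "is_ideal B T" "L \<subseteq> T" "T \<subseteq> N"
    "card (carrier (Add\<lparr>carrier := T\<rparr> Mod L)) = card (carrier (Add\<lparr>carrier := N\<rparr> Mod M))"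
    and z_T: "Add.cyclic_factor T N z s"
    using swap_ideal[OF p L M N LM MN z z' _ r] by blast
  then have "card (carrier (Add\<lparr>carrier := N\<rparr> Mod T)) = s"
    using subquotient.card_of_cyclic_factor[OF subquotient_Add_ideals[OF T(1) N T(3)] z_T] by blast
  then have "small_factor p T N"
    unfolding small_factor_def using s unfolding s_def by simp
  then show ?thesis
    using T by blast
qed

lemma lambda_trivial_over_infinite_factor:
  assumes M: "is_ideal B M" and N: "is_ideal B N" and MN: "M \<subseteq> N"
    and triv: "lambda_trivial L M" and z: "z \<in> M"
    and r: "odd (card (carrier (Add\<lparr>carrier := N\<rparr> Mod M)))"
    and I: "is_ideal B I" "L \<subseteq> I" "I \<subseteq> N" and g: "Add.cyclic_factor I N g 0"
    and z_inf: "\<forall>j::int. z [^]\<^bsub>Add\<^esub> j \<in> I \<longleftrightarrow> j = 0"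
  shows "lambda_trivial I N"
  unfolding lambda_trivial_def
proof
  fix x assume x: "x \<in> N"
  interpret Q: subquotient Mul M N
    using subquotient_Mul_ideals[OF M N MN] .
  have "x [^]\<^bsub>Mul\<^esub> card (carrier (Add\<lparr>carrier := N\<rparr> Mod M)) \<in> M"
    using Q.pow_card_mem[OF x] factor_carrier_Mul_eq[OF M ideal_subset[OF N]] by simp
  then have "lam (x [^]\<^bsub>Mul\<^esub> card (carrier (Add\<lparr>carrier := N\<rparr> Mod M))) z \<otimes>\<^bsub>Add\<^esub> inv\<^bsub>Add\<^esub> z \<in> I"
    using triv z I(2) unfolding lambda_trivial_def by blast
  then show "\<forall>y\<in>N. lam x y \<otimes>\<^bsub>Add\<^esub> inv\<^bsub>Add\<^esub> y \<in> I"
    using lambda_trivial_of_odd_power[OF I(1) N I(3) g _ _ z_inf r] x z MN ideal_subset[OF N] by blast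
qed

lemma swap_infinite_factor:
  assumes p: "Factorial_Ring.prime p"
    and L: "is_ideal B L" and M: "is_ideal B M" and N: "is_ideal B N" and LM: "L \<subseteq> M" and MN: "M \<subseteq> N"
    and z: "Add.cyclic_factor L M z 0" and triv: "lambda_trivial L M"
    and r: "Factorial_Ring.prime (card (carrier (Add\<lparr>carrier := N\<rparr> Mod M)))"
      "card (carrier (Add\<lparr>carrier := N\<rparr> Mod M)) > p"
  shows "(\<exists>M'. is_ideal B M' \<and> L \<subseteq> M' \<and> M' \<subseteq> N \<and>
      card (carrier (Add\<lparr>carrier := M'\<rparr> Mod L)) = card (carrier (Add\<lparr>carrier := N\<rparr> Mod M)) \<and>
      small_factor p M' N) \<or> small_factor p L N"
proof -
  have "odd (card (carrier (Add\<lparr>carrier := N\<rparr> Mod M)))"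
    using prime_odd_nat[OF r(1)] r(2) prime_ge_2_nat[OF p] by linarith
  note triv_over = lambda_trivial_over_infinite_factor[OF M N MN triv _ this]
  have z_M: "z \<in> M" and z_inf: "\<forall>j::int. z [^]\<^bsub>Add\<^esub> j \<in> L \<longleftrightarrow> j = 0"
    using z unfolding Add.cyclic_factor_def by simp_all
  have "(\<exists>T. is_ideal B T \<and> L \<subseteq> T \<and> T \<subseteq> N \<and>
      card (carrier (Add\<lparr>carrier := T\<rparr> Mod L)) = card (carrier (Add\<lparr>carrier := N\<rparr> Mod M)) \<and>
      Add.cyclic_factor T N z 0) \<or> (\<exists>g. Add.cyclic_factor L N g 0)"
    using swap_ideal[OF p L M N LM MN z cyclic_factor_Mul_of_lambda_trivial[OF L M LM triv z] _ r]
    by blast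
  then show ?thesis
  proof (elim disjE exE conjE)
    fix T assume T: "is_ideal B T" "L \<subseteq> T" "T \<subseteq> N"
      "card (carrier (Add\<lparr>carrier := T\<rparr> Mod L)) = card (carrier (Add\<lparr>carrier := N\<rparr> Mod M))"
      and z_T: "Add.cyclic_factor T N z 0"
    then have "lambda_trivial T N"
      using triv_over[OF z_M T(1-3) z_T] z_T unfolding Add.cyclic_factor_def by simp
    then show ?thesis
      using T z_T unfolding small_factor_def by blast
  next
    fix g assume "Add.cyclic_factor L N g 0"
    then show ?thesis
      using triv_over[OF z_M L order.refl _ _ z_inf] LM MN unfolding small_factor_def by blast
  qed
qed

lemma swap_small_factor:
  assumes p: "Factorial_Ring.prime p"
    and L: "is_ideal B L" and M: "is_ideal B M" and N: "is_ideal B N" and LM: "L \<subseteq> M" and MN: "M \<subseteq> N"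
    and small: "small_factor p L M"
    and r: "Factorial_Ring.prime (card (carrier (Add\<lparr>carrier := N\<rparr> Mod M)))"
      "card (carrier (Add\<lparr>carrier := N\<rparr> Mod M)) > p"
  shows "(\<exists>M'. is_ideal B M' \<and> L \<subseteq> M' \<and> M' \<subseteq> N \<and>
      card (carrier (Add\<lparr>carrier := M'\<rparr> Mod L)) = card (carrier (Add\<lparr>carrier := N\<rparr> Mod M)) \<and>
      small_factor p M' N) \<or> small_factor p L N"
  using small unfolding small_factor_def[of p L M]
proof
  assume "Factorial_Ring.prime (card (carrier (Add\<lparr>carrier := M\<rparr> Mod L))) \<and>
    card (carrier (Add\<lparr>carrier := M\<rparr> Mod L)) \<le> p"
  then show ?thesis
    using swap_small_prime_factor[OF p L M N LM MN _ _ r] by blast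
next
  assume "(\<exists>z. Add.cyclic_factor L M z 0) \<and> lambda_trivial L M"
  then show ?thesis
    using swap_infinite_factor[OF p L M N LM MN _ _ r] by blast
qed

end

section \<open>Chains of small factors\<close>
lemma one_in_U_set:
  fixes G :: "'a monoid"
  assumes "group G"
  shows "\<one>\<^bsub>G\<^esub> \<in> U_set G p"
  using group.ord_id[OF assms] monoid.one_closed[OF group.is_monoid[OF assms]]
  unfolding U_set_def by simp

lemma U_set_of_prime_pow:
  fixes G :: "'a monoid" (structure)
  assumes G: "group G" and x: "x \<in> carrier G" and q: "Factorial_Ring.prime q" "q > p"
    and pow: "x [^] q \<in> U_set G p"
  shows "x \<in> U_set G p"
proof -
  interpret group G
    by (rule G)
  have "x [^] (q * ord (x [^] q)) = \<one>"
    using x by (simp flip: nat_pow_pow)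
  then have ord_dvd: "ord x dvd q * ord (x [^] q)"
    using pow_eq_id[OF x] by blast
  moreover have "q * ord (x [^] q) \<noteq> 0"
    using q pow unfolding U_set_def by auto
  ultimately have "ord x \<noteq> 0"
    by (metis dvd_0_left)
  moreover have "t > p" if t: "Factorial_Ring.prime t" "t dvd ord x" for t
  proof -
    have "t dvd q * ord (x [^] q)"
      using t(2) ord_dvd by (rule dvd_trans)
    then have "t dvd q \<or> t dvd ord (x [^] q)"
      using prime_dvd_mult_iff[OF t(1)] by simp
    moreover have "t dvd q \<Longrightarrow> t = q"
      using primes_dvd_imp_eq[OF t(1) q(1)] .
    moreover have "t dvd ord (x [^] q) \<Longrightarrow> t > p"
      using pow t(1) unfolding U_set_def by blast
    ultimately show ?thesis
      using q(2) by blast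
  qed
  ultimately show ?thesis
    unfolding U_set_def using x by blast
qed

context brace begin

inductive small_chain :: "nat \<Rightarrow> 'a set \<Rightarrow> 'a set \<Rightarrow> bool" for p where
  refl: "is_ideal B S \<Longrightarrow> small_chain p S S"
| step: "small_chain p S K \<Longrightarrow> is_ideal B J \<Longrightarrow> K \<subseteq> J \<Longrightarrow> small_factor p K J \<Longrightarrow> small_chain p S J"

lemma small_chain_ideals: "small_chain p S K \<Longrightarrow> is_ideal B S \<and> is_ideal B K \<and> S \<subseteq> K"
  by (induction rule: small_chain.induct) auto

lemma small_chain_push:
  assumes p: "Factorial_Ring.prime p"
  shows "small_chain p S K \<Longrightarrow> is_ideal B J \<Longrightarrow> K \<subseteq> J \<Longrightarrow>
    Factorial_Ring.prime (card (carrier (Add\<lparr>carrier := J\<rparr> Mod K))) \<Longrightarrow>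
    card (carrier (Add\<lparr>carrier := J\<rparr> Mod K)) > p \<Longrightarrow>
    (\<exists>S'. is_ideal B S' \<and> S \<subseteq> S' \<and>
      card (carrier (Add\<lparr>carrier := S'\<rparr> Mod S)) = card (carrier (Add\<lparr>carrier := J\<rparr> Mod K)) \<and>
      small_chain p S' J) \<or> small_chain p S J"
proof (induction arbitrary: J rule: small_chain.induct)
  case (refl S)
  then show ?case
    using small_chain.refl by blast
next
  case (step S K0 K J)
  have K0: "is_ideal B K0" and K: "is_ideal B K"
    using small_chain_ideals[OF step.hyps(1)] step.hyps(2) by auto
  from swap_small_factor[OF p K0 K step.prems(1) step.hyps(3) step.prems(2) step.hyps(4) step.prems(3,4)]
  show ?case
  proof
    assume "\<exists>M'. is_ideal B M' \<and> K0 \<subseteq> M' \<and> M' \<subseteq> J \<and>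
      card (carrier (Add\<lparr>carrier := M'\<rparr> Mod K0)) = card (carrier (Add\<lparr>carrier := J\<rparr> Mod K)) \<and>
      small_factor p M' J"
    then obtain M' where M': "is_ideal B M'" "K0 \<subseteq> M'" "M' \<subseteq> J" "small_factor p M' J"
      and card: "card (carrier (Add\<lparr>carrier := M'\<rparr> Mod K0)) = card (carrier (Add\<lparr>carrier := J\<rparr> Mod K))"
      by blast
    from step.IH[OF M'(1,2)] card step.prems(3,4) show ?case
      using small_chain.step[OF _ step.prems(1) M'(3,4)] by auto
  next
    assume "small_factor p K0 J"
    then show ?case
      using small_chain.step[OF step.hyps(1) step.prems(1)] step.hyps(3) step.prems(2) by blast
  qed
qed

lemma U_plus_subset_of_prime_factor:
  assumes S: "is_ideal B S" and S': "is_ideal B S'" and SS': "S \<subseteq> S'"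
    and U: "S \<subseteq> U_plus B p \<inter> U_times B p"
    and q: "Factorial_Ring.prime q" "q > p" and card: "card (carrier (Add\<lparr>carrier := S'\<rparr> Mod S)) = q"
  shows "S' \<subseteq> U_plus B p \<inter> U_times B p"
proof
  fix x assume x: "x \<in> S'"
  then have x_carrier: "x \<in> bcar B"
    using ideal_subset[OF S'] by blast
  have "x [^]\<^bsub>Add\<^esub> q \<in> S"
    using subquotient.pow_card_mem[OF subquotient_Add_ideals[OF S S' SS'] x] card by simp
  moreover have "x [^]\<^bsub>Mul\<^esub> q \<in> S"
    using subquotient.pow_card_mem[OF subquotient_Mul_ideals[OF S S' SS'] x] card
      factor_carrier_Mul_eq[OF S ideal_subset[OF S']] by simp
  ultimately show "x \<in> U_plus B p \<inter> U_times B p"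
    using U U_set_of_prime_pow[OF Add.is_group _ q] U_set_of_prime_pow[OF Mul.is_group _ q] x_carrier
    unfolding U_plus_def U_times_def by auto
qed

lemma small_factor_cases:
  assumes small: "small_factor p L M" and m: "\<forall>t. Factorial_Ring.prime t \<and> t dvd m \<longrightarrow> t > p"
  shows "((\<exists>z. Add.cyclic_factor L M z 0) \<and> lambda_trivial L M) \<or>
    (Factorial_Ring.prime (card (carrier (Add\<lparr>carrier := M\<rparr> Mod L))) \<and>
     coprime m (card (carrier (Add\<lparr>carrier := M\<rparr> Mod L))))"
  using small unfolding small_factor_def
proof
  assume c: "Factorial_Ring.prime (card (carrier (Add\<lparr>carrier := M\<rparr> Mod L))) \<and>
    card (carrier (Add\<lparr>carrier := M\<rparr> Mod L)) \<le> p"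
  then have "\<not> card (carrier (Add\<lparr>carrier := M\<rparr> Mod L)) dvd m"
    using m by (meson not_le)
  then have "coprime m (card (carrier (Add\<lparr>carrier := M\<rparr> Mod L)))"
    using c prime_imp_coprime coprime_commute by blast
  then show ?thesis
    using c by blast
qed blast

lemma U_plus_mem_of_small_factor:
  assumes L: "is_ideal B L" and M: "is_ideal B M" and LM: "L \<subseteq> M" and small: "small_factor p L M"
    and x: "x \<in> M" "x \<in> U_plus B p"
  shows "x \<in> L"
proof -
  interpret Q: subquotient Add L M
    using subquotient_Add_ideals[OF L M LM] .
  have "Add.ord x > 0" and primes: "\<forall>t. Factorial_Ring.prime t \<and> t dvd Add.ord x \<longrightarrow> t > p"
    using x(2) unfolding U_plus_def U_set_def by auto
  moreover have "x [^]\<^bsub>Add\<^esub> Add.ord x \<in> L"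
    using x Add.pow_ord_eq_1 subgroup.one_closed[OF normal_imp_subgroup[OF ideal_normal_Add[OF L]]]
    unfolding U_plus_def U_set_def by auto
  ultimately show ?thesis
    using Q.mem_of_pow_mem[OF x(1)] small_factor_cases[OF small primes] by blast
qed

lemma U_times_mem_of_small_factor:
  assumes L: "is_ideal B L" and M: "is_ideal B M" and LM: "L \<subseteq> M" and small: "small_factor p L M"
    and x: "x \<in> M" "x \<in> U_times B p"
  shows "x \<in> L"
proof -
  interpret Q: subquotient Mul L M
    using subquotient_Mul_ideals[OF L M LM] .
  have "Mul.ord x > 0" and primes: "\<forall>t. Factorial_Ring.prime t \<and> t dvd Mul.ord x \<longrightarrow> t > p"
    using x(2) unfolding U_times_def U_set_def by auto
  moreover have "x [^]\<^bsub>Mul\<^esub> Mul.ord x \<in> L"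
    using x Mul.pow_ord_eq_1 subgroup.one_closed[OF normal_imp_subgroup[OF ideal_normal_Mul[OF L]]]
    unfolding U_times_def U_set_def by auto
  moreover have "(\<exists>z. Mul.cyclic_factor L M z 0) \<or>
    (Factorial_Ring.prime (card (carrier Q.K)) \<and> coprime (Mul.ord x) (card (carrier Q.K)))"
    using small_factor_cases[OF small primes]
  proof
    assume "(\<exists>z. Add.cyclic_factor L M z 0) \<and> lambda_trivial L M"
    then show ?thesis
      using cyclic_factor_Mul_of_lambda_trivial[OF L M LM] by blast
  qed (use factor_carrier_Mul_eq[OF L ideal_subset[OF M]] in simp)
  ultimately show ?thesis
    using Q.mem_of_pow_mem[OF x(1)] by blast
qed

lemma small_chain_U_subset:
  "small_chain p S K \<Longrightarrow> x \<in> K \<Longrightarrow> x \<in> U_plus B p \<or> x \<in> U_times B p \<Longrightarrow> x \<in> S"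
proof (induction rule: small_chain.induct)
  case (step S K J)
  then show ?case
    using small_chain_ideals[OF step.hyps(1)] U_plus_mem_of_small_factor U_times_mem_of_small_factor
    by blast
qed

lemma lambda_trivial_of_quot_in_soc:
  assumes "quot_in_soc B K J" and "is_ideal B J"
  shows "lambda_trivial K J"
  unfolding lambda_trivial_def
proof (intro ballI)
  fix x y assume "x \<in> J" "y \<in> J"
  then show "lam x y \<otimes>\<^bsub>Add\<^esub> inv\<^bsub>Add\<^esub> y \<in> K"
    using assms ideal_subset unfolding quot_in_soc_def mult_Add by blast
qed

lemma small_factor_of_supersoluble_step:
  assumes K: "is_ideal B K" and J: "is_ideal B J" and KJ: "K \<subseteq> J"
    and factor: "(infinite (carrier (quot_add B K J)) \<and>
        (\<exists>g\<in>carrier (quot_add B K J). generate (quot_add B K J) {g} = carrier (quot_add B K J)) \<and>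
        quot_in_soc B K J) \<or> Factorial_Ring.prime (card (carrier (quot_add B K J)))"
    and not_large: "\<not> (Factorial_Ring.prime (card (carrier (quot_add B K J))) \<and>
        card (carrier (quot_add B K J)) > p)"
  shows "small_factor p K J"
proof -
  interpret Q: subquotient Add K J
    using subquotient_Add_ideals[OF K J KJ] .
  have K_J: "quot_add B K J = Q.K"
    unfolding quot_add_def ..
  from factor show ?thesis
    unfolding K_J
  proof (elim disjE conjE bexE)
    fix g assume "infinite (carrier Q.K)" "g \<in> carrier Q.K" "generate Q.K {g} = carrier Q.K"
      and "quot_in_soc B K J"
    then show ?thesis
      using Q.cyclic_factor_of_generator lambda_trivial_of_quot_in_soc[OF _ J]
      unfolding small_factor_def by fastforce
  next
    assume "Factorial_Ring.prime (card (carrier Q.K))"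
    then show ?thesis
      using not_large unfolding K_J small_factor_def by (simp add: not_less)
  qed
qed

lemma small_chain_extend:
  assumes p: "Factorial_Ring.prime p"
    and S: "is_ideal B S" "S \<subseteq> U_plus B p \<inter> U_times B p" and chain: "small_chain p S K"
    and J: "is_ideal B J" and KJ: "K \<subseteq> J"
    and factor: "(infinite (carrier (quot_add B K J)) \<and>
        (\<exists>g\<in>carrier (quot_add B K J). generate (quot_add B K J) {g} = carrier (quot_add B K J)) \<and>
        quot_in_soc B K J) \<or> Factorial_Ring.prime (card (carrier (quot_add B K J)))"
  shows "\<exists>S'. is_ideal B S' \<and> S' \<subseteq> U_plus B p \<inter> U_times B p \<and> small_chain p S' J"
proof (cases "Factorial_Ring.prime (card (carrier (quot_add B K J))) \<and> card (carrier (quot_add B K J)) > p")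
  case True
  then have q: "Factorial_Ring.prime (card (carrier (Add\<lparr>carrier := J\<rparr> Mod K)))"
    "card (carrier (Add\<lparr>carrier := J\<rparr> Mod K)) > p"
    unfolding quot_add_def by auto
  from small_chain_push[OF p chain J KJ q] show ?thesis
    using U_plus_subset_of_prime_factor[OF S(1) _ _ S(2) q] S by blast
next
  case False
  then have "small_factor p K J"
    using small_factor_of_supersoluble_step[OF _ J KJ factor] small_chain_ideals[OF chain] by blast
  then show ?thesis
    using small_chain.step[OF chain J KJ] S by blast
qed

lemma small_chain_of_supersoluble:
  assumes p: "Factorial_Ring.prime p" and supersoluble: "supersoluble B"
  obtains S where "is_ideal B S" "S \<subseteq> U_plus B p \<inter> U_times B p" "small_chain p S (bcar B)"
proof -
  obtain I :: "nat \<Rightarrow> 'a set" and n where I0: "I 0 = {\<one>\<^bsub>Add\<^esub>}" and In: "I n = bcar B"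
    and ideals: "\<forall>i\<le>n. is_ideal B (I i)"
    and steps: "\<forall>i<n. I i \<subseteq> I (Suc i) \<and>
        ((infinite (carrier (quot_add B (I i) (I (Suc i)))) \<and>
          (\<exists>g\<in>carrier (quot_add B (I i) (I (Suc i))).
             generate (quot_add B (I i) (I (Suc i))) {g} = carrier (quot_add B (I i) (I (Suc i)))) \<and>
          quot_in_soc B (I i) (I (Suc i)))
         \<or> Factorial_Ring.prime (card (carrier (quot_add B (I i) (I (Suc i))))))"
    using supersoluble unfolding supersoluble_def by blast
  have "\<exists>S. is_ideal B S \<and> S \<subseteq> U_plus B p \<inter> U_times B p \<and> small_chain p S (I k)" if "k \<le> n" for k
    using that
  proof (induction k)
    case 0
    have "I 0 \<subseteq> U_plus B p \<inter> U_times B p"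
      using I0 one_in_U_set[OF Add.is_group] one_in_U_set[OF Mul.is_group] one_Mul
      unfolding U_plus_def U_times_def by simp
    then show ?case
      using ideals small_chain.refl by blast
  next
    case (Suc k)
    then obtain S where "is_ideal B S" "S \<subseteq> U_plus B p \<inter> U_times B p" "small_chain p S (I k)"
      by auto
    moreover have "is_ideal B (I (Suc k))"
      using ideals Suc.prems by blast
    ultimately show ?case
      using small_chain_extend[OF p] steps Suc.prems by (simp add: Suc_le_eq)
  qed
  from this[OF order.refl] show ?thesis
    using that unfolding In by blast
qed

theorem U_plus_eq_U_times_and_ideal:
  assumes p: "Factorial_Ring.prime p" and supersoluble: "supersoluble B"
  shows "U_plus B p = U_times B p \<and> is_ideal B (U_plus B p)"
proof -
  obtain S where S: "is_ideal B S" "S \<subseteq> U_plus B p \<inter> U_times B p" and chain: "small_chain p S (bcar B)"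
    using small_chain_of_supersoluble[OF p supersoluble] .
  have "U_plus B p \<subseteq> bcar B" and "U_times B p \<subseteq> bcar B"
    unfolding U_plus_def U_times_def U_set_def by auto
  then have "U_plus B p \<subseteq> S" and "U_times B p \<subseteq> S"
    using small_chain_U_subset[OF chain] by blast+
  then have "U_plus B p = S" and "U_times B p = S"
    using S(2) by auto
  then show ?thesis
    using S(1) by simp
qed

end

theorem corollary3p13:
  fixes B :: "'a brace_str" and p :: nat
  assumes "is_brace B" and "supersoluble B" and "Factorial_Ring.prime p"
  shows "U_plus B p = U_times B p \<and> is_ideal B (U_plus B p)"
proof -
  interpret brace B
    using assms(1) by (rule brace.intro)
  show ?thesis
    using U_plus_eq_U_times_and_ideal[OF assms(3,2)] .
qed

end
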